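(* Let $f_1,\dots,f_k$ be $C^1$ diffeomorphisms of a compact $d$-dimensional Riemannian manifold $M$ preserving the volume $m$, and suppose the associated Bernoulli IFS is $(n_0,\kappa_1,\kappa_2,b)$-uniform. Then there exist $C_1,\sigma>0$ such that for every $x\in M$, every $(d-b)$-dimensional subspace $E\subset T_xM$ and every integer $n\ge0$, $$\mathbb E\Big(\sup_{v\in U(E^\perp)}\big\|P_{(Df^n_\omega(x)E)^\perp}Df^n_\omega(x)v\big\|^{\sigma}\Big)<C_1e^{-n\sigma\kappa_1},\qquad \mathbb E\Big(\big(\inf_{v\in U(E)}\|Df^n_\omega(x)v\|\big)^{-\sigma}\Big)<C_1e^{n\sigma\kappa_2}.$$
   Context: Bernoulli IFS: $\Omega=\{1,\dots,k\}^{\mathbb Z}$ with the uniform Bernoulli probability $\mathbb P$; for $\omega\in\Omega$ and $n\ge1$, $f^n_\omega=f_{\omega_{n-1}}\circ\cdots\circ f_{\omega_0}$ ($f^0_\omega=\mathrm{id}$); $\mathbb E$ denotes expectation in $\omega$. $U(G)$ is the set of unit vectors of a subspace $G$, $E^\perp$ the orthogonal complement, $P_G$ the orthogonal projection onto $G$. For $x\in M$, $E\subset T_xM$ of dimension $d-b$: $C(x,E,n)=\mathbb E\big(\log\sup_{v\in U(E^\perp)}\|P_{(Df^n_\omega(x)E)^\perp}Df^n_\omega(x)v\|\big)$, $D(x,E,n)=\mathbb E\big(\log\inf_{u\in U(E)}\|Df^n_\omega(x)u\|\big)$. The IFS is $(n_0,\kappa_1,\kappa_2,b)$-uniform ($n_0\ge1$,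 $\kappa_1>0$, $\kappa_2<\kappa_1$, $b\in[1,d-1]$) if for all such $x,E$: $\frac1{n_0}C(x,E,n_0)<-\kappa_1$ and $\frac1{n_0}D(x,E,n_0)>-\kappa_2$. *)

theory Defs
  imports "HOL-Probability.Probability"
begin

section \<open>Compact embedded C1 submanifolds of a Euclidean space (with induced Riemannian metric)\<close>

definition C1_on :: "'a::euclidean_space set \<Rightarrow> ('a \<Rightarrow> 'b::euclidean_space) \<Rightarrow> bool" where
  "C1_on S g \<longleftrightarrow> (\<exists>D :: 'a \<Rightarrow> ('a \<Rightarrow>\<^sub>L 'b).
       (\<forall>y\<in>S. (g has_derivative blinfun_apply (D y)) (at y)) \<and> continuous_on S D)"

definition C1_submanifold :: "'m::euclidean_space itself \<Rightarrow> 'a::euclidean_space set \<Rightarrow> bool" where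
  "C1_submanifold _ M \<longleftrightarrow> (\<forall>x\<in>M. \<exists>U (W :: 'm set) \<phi> \<psi> (D :: 'm \<Rightarrow> ('m \<Rightarrow>\<^sub>L 'a)).
       open U \<and> x \<in> U \<and> open W \<and> homeomorphism W (M \<inter> U) \<phi> \<psi> \<and>
       (\<forall>w\<in>W. (\<phi> has_derivative blinfun_apply (D w)) (at w) \<and> inj (blinfun_apply (D w))) \<and>
       continuous_on W D)"

definition tangent_space :: "'a::euclidean_space set \<Rightarrow> 'a \<Rightarrow> 'a set" where
  "tangent_space M x = {v. \<exists>\<gamma>::real \<Rightarrow> 'a. (\<forall>t. \<gamma> t \<in> M) \<and> \<gamma> 0 = x \<and>
                              (\<gamma> has_vector_derivative v) (at 0)}"

definition Dmap :: "('a::euclidean_space \<Rightarrow> 'a) \<Rightarrow> 'a \<Rightarrow> 'a \<Rightarrow> 'a" where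
  "Dmap g x = frechet_derivative g (at x)"

text \<open>g is a C1 diffeomorphism of M: it is (the restriction to M of) a C1 map of the ambient
  space, maps M bijectively onto M, and its inverse on M is (the restriction of) a C1 map.\<close>
definition C1_diffeo_of :: "'a::euclidean_space set \<Rightarrow> ('a \<Rightarrow> 'a) \<Rightarrow> bool" where
  "C1_diffeo_of M g \<longleftrightarrow> C1_on UNIV g \<and> g ` M = M \<and>
     (\<exists>h. C1_on UNIV h \<and> (\<forall>x\<in>M. h (g x) = x \<and> g (h x) = x))"

text \<open>Gram determinant of d vectors (squared d-dimensional volume of the parallelotope).\<close>
definition gram_det :: "nat \<Rightarrow> (nat \<Rightarrow> 'a::real_inner) \<Rightarrow> real" where
  "gram_det d v = (\<Sum>p\<in>{p. p permutes {..<d}}. of_int (sign p) * (\<Prod>i<d. v i \<bullet> v (p i)))"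

text \<open>g preserves the Riemannian volume of the d-dimensional manifold M
  (Jacobian determinant of Dg(x) : T_xM \<rightarrow> T_{g x}M has absolute value 1 everywhere).\<close>
definition volume_preserving :: "nat \<Rightarrow> 'a::euclidean_space set \<Rightarrow> ('a \<Rightarrow> 'a) \<Rightarrow> bool" where
  "volume_preserving d M g \<longleftrightarrow> (\<forall>x\<in>M. \<forall>v. (\<forall>i<d. v i \<in> tangent_space M x) \<longrightarrow>
       gram_det d (\<lambda>i. Dmap g x (v i)) = gram_det d v)"

definition unit_vecs :: "'a::real_normed_vector set \<Rightarrow> 'a set" where
  "unit_vecs G = {v\<in>G. norm v = 1}"

text \<open>Orthogonal complement of E inside the ambient space T (here T = a tangent space).\<close>
definition orth_compl_in :: "'a::real_inner set \<Rightarrow> 'a set \<Rightarrow> 'a set" where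
  "orth_compl_in T E = {v\<in>T. \<forall>u\<in>E. u \<bullet> v = 0}"

definition proj_onto :: "'a::real_inner set \<Rightarrow> 'a \<Rightarrow> 'a" where
  "proj_onto G v = (THE w. w \<in> G \<and> (\<forall>u\<in>G. (v - w) \<bullet> u = 0))"

definition bernoulli_space :: "nat \<Rightarrow> (int \<Rightarrow> nat) measure" where
  "bernoulli_space k = PiM UNIV (\<lambda>_::int. measure_pmf (pmf_of_set {1..k}))"

primrec fiter :: "(nat \<Rightarrow> 'a \<Rightarrow> 'a) \<Rightarrow> (int \<Rightarrow> nat) \<Rightarrow> nat \<Rightarrow> 'a \<Rightarrow> 'a" where
  "fiter f \<omega> 0 = id"
| "fiter f \<omega> (Suc n) = f (\<omega> (int n)) \<circ> fiter f \<omega> n"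

definition Dfn :: "(nat \<Rightarrow> 'a::euclidean_space \<Rightarrow> 'a) \<Rightarrow> (int \<Rightarrow> nat) \<Rightarrow> nat \<Rightarrow> 'a \<Rightarrow> 'a \<Rightarrow> 'a" where
  "Dfn f \<omega> n x = Dmap (fiter f \<omega> n) x"

definition sup_transv :: "'a::euclidean_space set \<Rightarrow> (nat \<Rightarrow> 'a \<Rightarrow> 'a) \<Rightarrow> 'a \<Rightarrow> 'a set \<Rightarrow> nat \<Rightarrow> (int \<Rightarrow> nat) \<Rightarrow> real" where
  "sup_transv M f x E n \<omega> =
     (SUP v\<in>unit_vecs (orth_compl_in (tangent_space M x) E).
        norm (proj_onto (orth_compl_in (tangent_space M (fiter f \<omega> n x)) (Dfn f \<omega> n x ` E))
                        (Dfn f \<omega> n x v)))"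

definition inf_along :: "(nat \<Rightarrow> 'a::euclidean_space \<Rightarrow> 'a) \<Rightarrow> 'a \<Rightarrow> 'a set \<Rightarrow> nat \<Rightarrow> (int \<Rightarrow> nat) \<Rightarrow> real" where
  "inf_along f x E n \<omega> = (INF u\<in>unit_vecs E. norm (Dfn f \<omega> n x u))"

definition C_fun :: "nat \<Rightarrow> 'a::euclidean_space set \<Rightarrow> (nat \<Rightarrow> 'a \<Rightarrow> 'a) \<Rightarrow> 'a \<Rightarrow> 'a set \<Rightarrow> nat \<Rightarrow> real" where
  "C_fun k M f x E n = (\<integral>\<omega>. ln (sup_transv M f x E n \<omega>) \<partial>bernoulli_space k)"

definition D_fun :: "nat \<Rightarrow> (nat \<Rightarrow> 'a::euclidean_space \<Rightarrow> 'a) \<Rightarrow> 'a \<Rightarrow> 'a set \<Rightarrow> nat \<Rightarrow> real" where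
  "D_fun k f x E n = (\<integral>\<omega>. ln (inf_along f x E n \<omega>) \<partial>bernoulli_space k)"

definition uniform_IFS :: "nat \<Rightarrow> nat \<Rightarrow> 'a::euclidean_space set \<Rightarrow> (nat \<Rightarrow> 'a \<Rightarrow> 'a) \<Rightarrow>
     nat \<Rightarrow> real \<Rightarrow> real \<Rightarrow> nat \<Rightarrow> bool" where
  "uniform_IFS k d M f n0 \<kappa>1 \<kappa>2 b \<longleftrightarrow>
     n0 \<ge> 1 \<and> \<kappa>1 > 0 \<and> \<kappa>2 < \<kappa>1 \<and> 1 \<le> b \<and> b \<le> d - 1 \<and>
     (\<forall>x\<in>M. \<forall>E. subspace E \<and> E \<subseteq> tangent_space M x \<and> dim E = d - b \<longrightarrow>
        C_fun k M f x E n0 / real n0 < - \<kappa>1 \<and> D_fun k f x E n0 / real n0 > - \<kappa>2)"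

end

theory Submission
  imports Defs
begin

text \<open>Along a word \<open>\<omega>\<^sub>0 \<dots> \<omega>\<^sub>n\<^sub>-\<^sub>1\<close> the transversal norm of the derivative is submultiplicative and
  the conorm on \<open>E\<close> supermultiplicative, so their logarithms are sub- and superadditive cocycles over
  the Bernoulli shift, bounded by \<open>n log L\<close> with \<open>L\<close> a bound for the derivatives and their inverses.
  The uniformity hypothesis says that their means over \<open>n0\<close> steps lie below \<open>-n0 \<kappa>1\<close> resp.
  above \<open>-n0 \<kappa>2\<close>; by compactness of the bundle of tangent \<open>(d-b)\<close>-planes and semicontinuity this
  holds with a uniform margin \<open>\<delta>\<close>. For bounded \<open>X\<close> and small \<open>\<sigma>\<close>,
  \<open>exp (\<sigma> X) \<le> 1 + \<sigma> X + \<sigma>\<^sup>2 X\<^sup>2\<close> turns the margin into a one-block bound for the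
  \<open>\<sigma>\<close>-th moment, and since the first \<open>n\<close> symbols are uniformly distributed, conditioning on
  successive blocks of length \<open>n0\<close> multiplies these bounds.\<close>

section \<open>Orthogonal projections inside a subspace\<close>

lemma proj_onto_ex1:
  fixes G :: "'a::euclidean_space set"
  assumes "subspace G"
  shows "\<exists>!w. w \<in> G \<and> (\<forall>u\<in>G. (v - w) \<bullet> u = 0)"
proof -
  obtain y z where y: "y \<in> span G" and z: "\<And>w. w \<in> span G \<Longrightarrow> orthogonal z w" and v: "v = y + z"
    using orthogonal_subspace_decomp_exists by blast
  have sG: "span G = G" using assms by (simp add: span_eq_iff)
  have ex: "y \<in> G \<and> (\<forall>u\<in>G. (v - y) \<bullet> u = 0)"
    using y z v sG by (simp add: orthogonal_def)
  show ?thesis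
  proof (rule ex1I[of _ y])
    fix w assume w: "w \<in> G \<and> (\<forall>u\<in>G. (v - w) \<bullet> u = 0)"
    have "y - w \<in> G" using w ex assms by (simp add: subspace_diff)
    then have "(v - w) \<bullet> (y - w) = 0" "(v - y) \<bullet> (y - w) = 0" using w ex by auto
    then have "(y - w) \<bullet> (y - w) = 0" by (simp add: algebra_simps inner_diff_left inner_diff_right)
    then show "w = y" by simp
  qed (rule ex)
qed

lemma proj_onto_mem:
  fixes G :: "'a::euclidean_space set"
  assumes "subspace G"
  shows "proj_onto G v \<in> G"
  using theI'[OF proj_onto_ex1[OF assms, of v]] unfolding proj_onto_def by auto

lemma proj_onto_orthogonal:
  fixes G :: "'a::euclidean_space set"
  assumes "subspace G" "u \<in> G"
  shows "(v - proj_onto G v) \<bullet> u = 0"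
  using theI'[OF proj_onto_ex1[OF assms(1), of v]] assms(2) unfolding proj_onto_def by auto

lemma proj_onto_unique:
  fixes G :: "'a::euclidean_space set"
  assumes "subspace G" "w \<in> G" "\<And>u. u \<in> G \<Longrightarrow> (v - w) \<bullet> u = 0"
  shows "proj_onto G v = w"
  using the1_equality[OF proj_onto_ex1[OF assms(1), of v]] assms unfolding proj_onto_def by auto

lemma proj_onto_add:
  fixes G :: "'a::euclidean_space set"
  assumes "subspace G"
  shows "proj_onto G (v1 + v2) = proj_onto G v1 + proj_onto G v2"
proof (rule proj_onto_unique[OF assms])
  show "proj_onto G v1 + proj_onto G v2 \<in> G"
    using proj_onto_mem[OF assms] assms by (simp add: subspace_add)
  fix u assume u: "u \<in> G"
  have "v1 + v2 - (proj_onto G v1 + proj_onto G v2) = (v1 - proj_onto G v1) + (v2 - proj_onto G v2)"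
    by simp
  then show "(v1 + v2 - (proj_onto G v1 + proj_onto G v2)) \<bullet> u = 0"
    using proj_onto_orthogonal[OF assms u, of v1] proj_onto_orthogonal[OF assms u, of v2]
    by (simp only: inner_add_left)
qed

lemma proj_onto_scaleR:
  fixes G :: "'a::euclidean_space set"
  assumes "subspace G"
  shows "proj_onto G (c *\<^sub>R v) = c *\<^sub>R proj_onto G v"
proof (rule proj_onto_unique[OF assms])
  show "c *\<^sub>R proj_onto G v \<in> G" using proj_onto_mem[OF assms] assms by (simp add: subspace_scale)
  fix u assume "u \<in> G"
  then have "(v - proj_onto G v) \<bullet> u = 0" by (rule proj_onto_orthogonal[OF assms])
  then show "(c *\<^sub>R v - c *\<^sub>R proj_onto G v) \<bullet> u = 0"
    by (metis inner_scaleR_left mult_zero_right scaleR_right_diff_distrib)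
qed

lemma proj_onto_eq_0:
  fixes G :: "'a::euclidean_space set"
  assumes "subspace G" "\<And>u. u \<in> G \<Longrightarrow> v \<bullet> u = 0"
  shows "proj_onto G v = 0"
  by (rule proj_onto_unique) (use assms in \<open>auto simp: subspace_0\<close>)

lemma inner_proj_onto:
  fixes G :: "'a::euclidean_space set"
  assumes "subspace G" "g \<in> G"
  shows "v \<bullet> g = proj_onto G v \<bullet> g"
  using proj_onto_orthogonal[OF assms] by (simp add: inner_diff_left)

lemma norm_proj_onto_le:
  fixes G :: "'a::euclidean_space set"
  assumes "subspace G"
  shows "norm (proj_onto G v) \<le> norm v"
proof -
  let ?p = "proj_onto G v"
  have "(v - ?p) \<bullet> ?p = 0" by (rule proj_onto_orthogonal[OF assms proj_onto_mem[OF assms]])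
  then have "v \<bullet> v = ?p \<bullet> ?p + (v - ?p) \<bullet> (v - ?p)"
    by (simp add: inner_diff_left inner_diff_right inner_commute algebra_simps)
  then have "?p \<bullet> ?p \<le> v \<bullet> v" by (simp add: add_increasing2)
  then show ?thesis by (simp add: norm_eq_sqrt_inner)
qed

lemma subspace_orth_compl_in:
  fixes T :: "'a::euclidean_space set"
  assumes "subspace T"
  shows "subspace (orth_compl_in T F)"
  using assms unfolding subspace_def orth_compl_in_def by (auto simp: inner_add_right)

lemma mem_if_orthogonal_orth_compl_in:
  fixes T :: "'a::euclidean_space set"
  assumes "subspace T" "subspace F" "F \<subseteq> T" "u \<in> T" "\<And>g. g \<in> orth_compl_in T F \<Longrightarrow> u \<bullet> g = 0"
  shows "u \<in> F"
proof -
  let ?p = "proj_onto F u"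
  have p: "?p \<in> F" "\<And>e. e \<in> F \<Longrightarrow> (u - ?p) \<bullet> e = 0"
    using proj_onto_mem[OF assms(2)] proj_onto_orthogonal[OF assms(2)] by auto
  have "u - ?p \<in> orth_compl_in T F"
    unfolding orth_compl_in_def using p assms by (auto simp: subspace_diff inner_commute)
  then have "u \<bullet> (u - ?p) = 0" using assms by auto
  moreover have "?p \<bullet> (u - ?p) = 0" using p by (simp add: inner_commute)
  ultimately have "(u - ?p) \<bullet> (u - ?p) = 0" by (simp add: inner_diff_left)
  then show ?thesis using p by simp
qed

lemma diff_proj_onto_orth_compl_in:
  fixes T :: "'a::euclidean_space set"
  assumes "subspace T" "subspace F" "F \<subseteq> T" "u \<in> T"
  shows "u - proj_onto (orth_compl_in T F) u \<in> F"
proof (rule mem_if_orthogonal_orth_compl_in[OF assms(1-3)])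
  have "proj_onto (orth_compl_in T F) u \<in> T"
    using proj_onto_mem[OF subspace_orth_compl_in[OF assms(1)]] by (simp add: orth_compl_in_def)
  then show "u - proj_onto (orth_compl_in T F) u \<in> T" using assms(1,4) by (simp add: subspace_diff)
qed (rule proj_onto_orthogonal[OF subspace_orth_compl_in[OF assms(1)]])

lemma orth_compl_in_nonzero:
  fixes T :: "'a::euclidean_space set"
  assumes "subspace T" "subspace E" "E \<subseteq> T" "dim E < dim T"
  shows "\<exists>v\<in>orth_compl_in T E. v \<noteq> 0"
proof (rule ccontr)
  assume "\<not> ?thesis"
  then have "T \<subseteq> E"
    using mem_if_orthogonal_orth_compl_in[OF assms(1-3)] by (metis inner_zero_right subsetI)
  then show False using assms(4) dim_subset[of T E] by simp
qed

lemma unit_vecs_nonempty: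
  fixes G :: "'a::euclidean_space set"
  assumes "subspace G" "v \<in> G" "v \<noteq> 0"
  shows "unit_vecs G \<noteq> {}"
proof -
  have "(1 / norm v) *\<^sub>R v \<in> unit_vecs G"
    unfolding unit_vecs_def using assms by (auto simp: subspace_scale)
  then show ?thesis by auto
qed

lemma unit_vecs_nonempty_dim:
  fixes G :: "'a::euclidean_space set"
  assumes "subspace G" "dim G \<ge> 1"
  shows "unit_vecs G \<noteq> {}"
proof -
  have "\<not> G \<subseteq> {0}"
  proof
    assume "G \<subseteq> {0}"
    from dim_subset[OF this] have "dim G = 0" by simp
    with assms(2) show False by simp
  qed
  then show ?thesis using unit_vecs_nonempty[OF assms(1)] by blast
qed

section \<open>Transversal norm and conorm of a linear map\<close>

definition transv_norm :: "'a::euclidean_space set \<Rightarrow> 'a set \<Rightarrow> 'a set \<Rightarrow> ('a \<Rightarrow> 'a) \<Rightarrow> real" where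
  "transv_norm T T' E A =
     (SUP v\<in>unit_vecs (orth_compl_in T E). norm (proj_onto (orth_compl_in T' (A ` E)) (A v)))"

definition conorm :: "'a::euclidean_space set \<Rightarrow> ('a \<Rightarrow> 'a) \<Rightarrow> real" where
  "conorm E A = (INF u\<in>unit_vecs E. norm (A u))"

lemma bdd_above_transv:
  fixes A :: "'a::euclidean_space \<Rightarrow> 'a"
  assumes "linear A" "subspace T'"
  shows "bdd_above ((\<lambda>v. norm (proj_onto (orth_compl_in T' F) (A v))) ` unit_vecs X)"
proof -
  obtain c where c: "\<And>x. norm (A x) \<le> c * norm x"
    using linear_bounded_pos[OF assms(1)] by blast
  have "norm (proj_onto (orth_compl_in T' F) (A v)) \<le> c" if "v \<in> unit_vecs X" for v
  proof -
    have "norm (proj_onto (orth_compl_in T' F) (A v)) \<le> norm (A v)"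
      by (rule norm_proj_onto_le[OF subspace_orth_compl_in[OF assms(2)]])
    also have "\<dots> \<le> c" using c[of v] that by (simp add: unit_vecs_def)
    finally show ?thesis .
  qed
  then show ?thesis by (rule bdd_aboveI2)
qed

lemma transv_norm_upper:
  fixes A :: "'a::euclidean_space \<Rightarrow> 'a"
  assumes "linear A" "subspace T'" "v \<in> unit_vecs (orth_compl_in T E)"
  shows "norm (proj_onto (orth_compl_in T' (A ` E)) (A v)) \<le> transv_norm T T' E A"
  unfolding transv_norm_def by (rule cSUP_upper[OF assms(3) bdd_above_transv[OF assms(1,2)]])

lemma transv_norm_nonneg:
  fixes A :: "'a::euclidean_space \<Rightarrow> 'a"
  assumes "linear A" "subspace T'" "unit_vecs (orth_compl_in T E) \<noteq> {}"
  shows "0 \<le> transv_norm T T' E A"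
  using assms(3) transv_norm_upper[OF assms(1,2)] by (meson ex_in_conv norm_ge_zero order_trans)

lemma transv_norm_least:
  fixes A :: "'a::euclidean_space \<Rightarrow> 'a"
  assumes "unit_vecs (orth_compl_in T E) \<noteq> {}"
    and "\<And>v. v \<in> unit_vecs (orth_compl_in T E) \<Longrightarrow>
           norm (proj_onto (orth_compl_in T' (A ` E)) (A v)) \<le> c"
  shows "transv_norm T T' E A \<le> c"
  unfolding transv_norm_def by (rule cSUP_least[OF assms])

lemma transv_norm_le_bound:
  fixes A :: "'a::euclidean_space \<Rightarrow> 'a"
  assumes "subspace T'" "\<And>y. norm (A y) \<le> c * norm y" "unit_vecs (orth_compl_in T E) \<noteq> {}"
  shows "transv_norm T T' E A \<le> c"
proof (rule transv_norm_least[OF assms(3)])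
  fix v assume "v \<in> unit_vecs (orth_compl_in T E)"
  then have "norm v = 1" by (simp add: unit_vecs_def)
  have "norm (proj_onto (orth_compl_in T' (A ` E)) (A v)) \<le> norm (A v)"
    by (rule norm_proj_onto_le[OF subspace_orth_compl_in[OF assms(1)]])
  also have "\<dots> \<le> c" using assms(2)[of v] \<open>norm v = 1\<close> by simp
  finally show "norm (proj_onto (orth_compl_in T' (A ` E)) (A v)) \<le> c" .
qed

lemma inner_le_transv_norm:
  fixes A :: "'a::euclidean_space \<Rightarrow> 'a"
  assumes "linear A" "subspace T'" "v \<in> unit_vecs (orth_compl_in T E)"
    and "g \<in> unit_vecs (orth_compl_in T' (A ` E))"
  shows "A v \<bullet> g \<le> transv_norm T T' E A"
proof -
  let ?G = "orth_compl_in T' (A ` E)"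
  have G: "subspace ?G" by (rule subspace_orth_compl_in[OF assms(2)])
  have g: "g \<in> ?G" "norm g = 1" using assms(4) by (auto simp: unit_vecs_def)
  have "A v \<bullet> g = proj_onto ?G (A v) \<bullet> g" by (rule inner_proj_onto[OF G g(1)])
  also have "\<dots> \<le> norm (proj_onto ?G (A v))" by (metis norm_cauchy_schwarz g(2) mult.right_neutral)
  also have "\<dots> \<le> transv_norm T T' E A" by (rule transv_norm_upper[OF assms(1-3)])
  finally show ?thesis .
qed

lemma less_transv_norm_witness:
  fixes A :: "'a::euclidean_space \<Rightarrow> 'a"
  assumes "linear A" "subspace T'" "unit_vecs (orth_compl_in T E) \<noteq> {}"
    and "0 \<le> c" "c < transv_norm T T' E A"
  obtains v g where "v \<in> unit_vecs (orth_compl_in T E)" "g \<in> unit_vecs (orth_compl_in T' (A ` E))"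
    "c < A v \<bullet> g"
proof -
  let ?G = "orth_compl_in T' (A ` E)"
  have G: "subspace ?G" by (rule subspace_orth_compl_in[OF assms(2)])
  obtain v where v: "v \<in> unit_vecs (orth_compl_in T E)" and cv: "c < norm (proj_onto ?G (A v))"
    using assms(5) less_cSUP_iff[OF assms(3) bdd_above_transv[OF assms(1,2)]]
    unfolding transv_norm_def by blast
  define z where "z = proj_onto ?G (A v)"
  have z: "z \<in> ?G" "z \<noteq> 0" using cv assms(4) proj_onto_mem[OF G] by (auto simp: z_def)
  define g where "g = (1 / norm z) *\<^sub>R z"
  have "g \<in> unit_vecs ?G" using z G by (simp add: g_def unit_vecs_def subspace_scale)
  moreover have "A v \<bullet> g = norm z"
  proof -
    have "A v \<bullet> g = z \<bullet> g"
      unfolding z_def using \<open>g \<in> unit_vecs ?G\<close> by (intro inner_proj_onto[OF G]) (simp add: unit_vecs_def)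
    also have "\<dots> = norm z" using z(2) by (simp add: g_def dot_square_norm power2_eq_square)
    finally show ?thesis .
  qed
  ultimately show thesis using that v cv by (simp add: z_def)
qed

text \<open>The component of \<open>A v\<close> along \<open>A ` E\<close> is killed by the second projection, so only the
  transversal part of \<open>A v\<close>, of norm at most \<open>transv_norm T T' E A\<close>, is fed into \<open>B\<close>.\<close>
lemma transv_norm_compose_le:
  fixes A B :: "'a::euclidean_space \<Rightarrow> 'a"
  assumes T: "subspace T" "subspace T'" "subspace T''" "subspace E" "E \<subseteq> T"
    and lin: "linear A" "linear B" and AT: "A ` T \<subseteq> T'" and BT: "B ` T' \<subseteq> T''"
    and ne1: "unit_vecs (orth_compl_in T E) \<noteq> {}"
    and ne2: "unit_vecs (orth_compl_in T' (A ` E)) \<noteq> {}"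
  shows "transv_norm T T'' E (B \<circ> A) \<le> transv_norm T T' E A * transv_norm T' T'' (A ` E) B"
proof (rule transv_norm_least[OF ne1])
  fix v assume v: "v \<in> unit_vecs (orth_compl_in T E)"
  define G' where "G' = orth_compl_in T' (A ` E)"
  define G'' where "G'' = orth_compl_in T'' (B ` A ` E)"
  have sG': "subspace G'" unfolding G'_def by (rule subspace_orth_compl_in[OF T(2)])
  have sG'': "subspace G''" unfolding G''_def by (rule subspace_orth_compl_in[OF T(3)])
  have "v \<in> T" using v unfolding unit_vecs_def orth_compl_in_def by auto
  define w where "w = proj_onto G' (A v)"
  have wG: "w \<in> G'" unfolding w_def by (rule proj_onto_mem[OF sG'])
  have "A v - w \<in> A ` E"
    unfolding w_def G'_def using AT T(5) \<open>v \<in> T\<close>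
    by (intro diff_proj_onto_orth_compl_in[OF T(2) linear_subspace_image[OF lin(1) T(4)]]) auto
  then have "proj_onto G'' (B (A v - w)) = 0"
    by (intro proj_onto_eq_0[OF sG'']) (auto simp: G''_def orth_compl_in_def)
  then have eq: "proj_onto G'' (B (A v)) = proj_onto G'' (B w)"
    using proj_onto_add[OF sG'', of "B w" "B (A v - w)"] by (simp add: linear_diff[OF lin(2)])
  have STA: "norm w \<le> transv_norm T T' E A"
    unfolding w_def G'_def by (rule transv_norm_upper[OF lin(1) T(2) v])
  have STB0: "0 \<le> transv_norm T' T'' (A ` E) B" by (rule transv_norm_nonneg[OF lin(2) T(3) ne2])
  have "norm (proj_onto G'' (B w)) \<le> norm w * transv_norm T' T'' (A ` E) B"
  proof (cases "w = 0")
    case True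
    then show ?thesis using linear_0[OF lin(2)] proj_onto_eq_0[OF sG'', of 0] by simp
  next
    case False
    define u where "u = (1 / norm w) *\<^sub>R w"
    have u: "u \<in> unit_vecs G'"
      unfolding u_def unit_vecs_def using False wG sG' by (simp add: subspace_scale)
    have "proj_onto G'' (B w) = norm w *\<^sub>R proj_onto G'' (B u)"
      using False by (simp add: u_def linear_scale[OF lin(2)] proj_onto_scaleR[OF sG''])
    then show ?thesis
      using transv_norm_upper[OF lin(2) T(3) u[unfolded G'_def]]
      by (simp add: G''_def mult_left_mono image_comp)
  qed
  also have "\<dots> \<le> transv_norm T T' E A * transv_norm T' T'' (A ` E) B"
    by (rule mult_right_mono[OF STA STB0])
  finally show "norm (proj_onto (orth_compl_in T'' ((B \<circ> A) ` E)) ((B \<circ> A) v))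
      \<le> transv_norm T T' E A * transv_norm T' T'' (A ` E) B"
    using eq by (simp add: G''_def image_comp)
qed

text \<open>If \<open>A' A = id\<close> on \<open>T\<close>, a unit vector \<open>v \<perpendicular> E\<close> splits as \<open>e + A' z\<close> with \<open>e \<in> E\<close> and \<open>z\<close>
  the transversal part of \<open>A v\<close>; pairing with \<open>v\<close> gives \<open>1 \<le> c |z|\<close>.\<close>
lemma transv_norm_ge_inverse:
  fixes A A' :: "'a::euclidean_space \<Rightarrow> 'a"
  assumes T: "subspace T" "subspace T'" "subspace E" "E \<subseteq> T"
    and lin: "linear A" "linear A'" and AT: "A ` T \<subseteq> T'"
    and inv: "\<And>u. u \<in> T \<Longrightarrow> A' (A u) = u"
    and c: "c > 0" "\<And>y. norm (A' y) \<le> c * norm y"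
    and ne1: "unit_vecs (orth_compl_in T E) \<noteq> {}"
  shows "1 / c \<le> transv_norm T T' E A"
proof -
  obtain v where v: "v \<in> unit_vecs (orth_compl_in T E)" using ne1 by blast
  have vT: "v \<in> T" and vn: "norm v = 1" and vE: "\<And>e. e \<in> E \<Longrightarrow> e \<bullet> v = 0"
    using v unfolding unit_vecs_def orth_compl_in_def by auto
  define z where "z = proj_onto (orth_compl_in T' (A ` E)) (A v)"
  have "A v - z \<in> A ` E"
    unfolding z_def using AT T(4) vT
    by (intro diff_proj_onto_orth_compl_in[OF T(2) linear_subspace_image[OF lin(1) T(3)]]) auto
  then obtain e where e: "e \<in> E" "A v - z = A e" by auto
  have "v = A' (A e + z)" using inv vT e by (metis diff_add_cancel)
  also have "\<dots> = e + A' z" using inv e T(4) linear_add[OF lin(2)] by auto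
  finally have veq: "v = e + A' z" .
  have "1 = v \<bullet> v" using vn by (simp add: norm_eq_1)
  also have "\<dots> = v \<bullet> A' z"
    using vE[OF e(1)] by (subst (2) veq) (simp add: inner_add_right inner_commute)
  also have "\<dots> \<le> norm v * norm (A' z)" by (rule Cauchy_Schwarz_ineq2[THEN order_trans[OF abs_ge_self]])
  also have "\<dots> \<le> c * norm z" using c(2)[of z] vn by simp
  finally have "1 / c \<le> norm z" using c(1) by (simp add: field_simps)
  also have "norm z \<le> transv_norm T T' E A"
    unfolding z_def by (rule transv_norm_upper[OF lin(1) T(2) v])
  finally show ?thesis .
qed

lemma bdd_below_norm_image: "bdd_below ((\<lambda>u. norm (A u)) ` X)"
  by (auto intro: bdd_belowI2[of _ 0])

lemma conorm_lower:
  assumes "u \<in> unit_vecs E"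
  shows "conorm E A \<le> norm (A u)"
  unfolding conorm_def by (rule cINF_lower[OF bdd_below_norm_image assms])

lemma conorm_greatest:
  assumes "unit_vecs E \<noteq> {}" "\<And>u. u \<in> unit_vecs E \<Longrightarrow> c \<le> norm (A u)"
  shows "c \<le> conorm E A"
  unfolding conorm_def by (rule cINF_greatest[OF assms])

lemma conorm_nonneg:
  assumes "unit_vecs E \<noteq> {}"
  shows "0 \<le> conorm E A"
  by (rule conorm_greatest[OF assms]) simp

lemma conorm_le_bound:
  assumes "unit_vecs E \<noteq> {}" "\<And>y. norm (A y) \<le> c * norm y"
  shows "conorm E A \<le> c"
proof -
  obtain u where u: "u \<in> unit_vecs E" using assms by blast
  then have "conorm E A \<le> norm (A u)" by (rule conorm_lower)
  also have "\<dots> \<le> c" using assms(2)[of u] u by (simp add: unit_vecs_def)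
  finally show ?thesis .
qed

lemma conorm_ge_inverse:
  fixes A A' :: "'a::euclidean_space \<Rightarrow> 'a"
  assumes "unit_vecs E \<noteq> {}" "\<And>u. u \<in> E \<Longrightarrow> A' (A u) = u"
    and c: "c > 0" "\<And>y. norm (A' y) \<le> c * norm y"
  shows "1 / c \<le> conorm E A"
proof (rule conorm_greatest[OF assms(1)])
  fix u assume u: "u \<in> unit_vecs E"
  then have "1 = norm (A' (A u))" using assms(2) by (auto simp: unit_vecs_def)
  also have "\<dots> \<le> c * norm (A u)" by (rule c(2))
  finally show "1 / c \<le> norm (A u)" using c(1) by (simp add: field_simps)
qed

lemma conorm_compose_ge:
  fixes A B :: "'a::euclidean_space \<Rightarrow> 'a"
  assumes "subspace E" "linear A" "linear B" "unit_vecs E \<noteq> {}"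
    and inj: "\<And>u. u \<in> E \<Longrightarrow> u \<noteq> 0 \<Longrightarrow> A u \<noteq> 0"
  shows "conorm E A * conorm (A ` E) B \<le> conorm E (B \<circ> A)"
proof (rule conorm_greatest[OF assms(4)])
  fix u assume u: "u \<in> unit_vecs E"
  have uE: "u \<in> E" and "u \<noteq> 0" using u by (auto simp: unit_vecs_def)
  then have Au: "A u \<noteq> 0" using inj by blast
  define u' where "u' = (1 / norm (A u)) *\<^sub>R A u"
  have "(1 / norm (A u)) *\<^sub>R u \<in> E" using uE assms(1) by (simp add: subspace_scale)
  then have "u' \<in> A ` E" unfolding u'_def by (metis image_eqI linear_scale[OF assms(2)])
  then have u': "u' \<in> unit_vecs (A ` E)" using Au by (simp add: u'_def unit_vecs_def)
  have "conorm E A * conorm (A ` E) B \<le> norm (A u) * conorm (A ` E) B"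
    using conorm_nonneg u' by (intro mult_right_mono[OF conorm_lower[OF u]]) blast
  also have "\<dots> \<le> norm (A u) * norm (B u')"
    by (rule mult_left_mono[OF conorm_lower[OF u']]) simp
  also have "norm (A u) * norm (B u') = norm (B (A u))"
    unfolding u'_def using Au by (simp add: linear_scale[OF assms(3)])
  finally show "conorm E A * conorm (A ` E) B \<le> norm ((B \<circ> A) u)" by simp
qed

section \<open>Words and the Bernoulli measure\<close>

definition words :: "nat \<Rightarrow> nat \<Rightarrow> nat list set" where
  "words k n = {xs. length xs = n \<and> set xs \<subseteq> {1..k}}"

definition prefix_word :: "nat \<Rightarrow> (int \<Rightarrow> nat) \<Rightarrow> nat list" where
  "prefix_word n \<omega> = map (\<lambda>j. \<omega> (int j)) [0..<n]"

definition word_avg :: "nat \<Rightarrow> nat \<Rightarrow> (nat list \<Rightarrow> real) \<Rightarrow> real" where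
  "word_avg k n G = (\<Sum>xs\<in>words k n. G xs) / real k ^ n"

lemma finite_words: "finite (words k n)"
proof -
  have "words k n \<subseteq> {xs. set xs \<subseteq> {1..k} \<and> length xs = n}" unfolding words_def by auto
  then show ?thesis using finite_lists_length_eq[of "{1..k}" n] finite_subset by blast
qed

lemma words_Suc: "words k (Suc n) = (\<lambda>(a, xs). a # xs) ` ({1..k} \<times> words k n)"
  unfolding words_def by (auto simp: length_Suc_conv image_iff)

lemma card_words: "card (words k n) = k ^ n"
proof (induction n)
  case 0
  have "words k 0 = {[]}" unfolding words_def by auto
  then show ?case by simp
next
  case (Suc n)
  have "inj_on (\<lambda>(a, xs). a # xs) ({1..k} \<times> words k n)" by (auto simp: inj_on_def)
  then have "card (words k (Suc n)) = card ({1..k} \<times> words k n)"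
    unfolding words_Suc by (rule card_image)
  also have "\<dots> = k * k ^ n" using Suc by (simp add: card_cartesian_product)
  finally show ?case by simp
qed

lemma bij_betw_append_words:
  "bij_betw (\<lambda>(xs, ys). xs @ ys) (words k n \<times> words k m) (words k (n + m))"
proof (rule bij_betwI[where g = "\<lambda>zs. (take n zs, drop n zs)"])
  show "(\<lambda>(xs, ys). xs @ ys) \<in> words k n \<times> words k m \<rightarrow> words k (n + m)"
    unfolding words_def by (auto simp: subset_iff)
  show "(\<lambda>zs. (take n zs, drop n zs)) \<in> words k (n + m) \<rightarrow> words k n \<times> words k m"
    unfolding words_def by (auto dest: in_set_takeD in_set_dropD)
  show "(\<lambda>zs. (take n zs, drop n zs)) ((\<lambda>(xs, ys). xs @ ys) p) = p" if "p \<in> words k n \<times> words k m" for p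
    using that unfolding words_def by (cases p) auto
  show "(\<lambda>(xs, ys). xs @ ys) (take n zs, drop n zs) = zs" for zs :: "nat list"
    by simp
qed

lemma sum_words_append:
  "(\<Sum>zs\<in>words k (n + m). G zs) = (\<Sum>xs\<in>words k n. \<Sum>ys\<in>words k m. G (xs @ ys))"
proof -
  have "(\<Sum>zs\<in>words k (n + m). G zs) = (\<Sum>p\<in>words k n \<times> words k m. G ((\<lambda>(xs, ys). xs @ ys) p))"
    by (rule sum.reindex_bij_betw[OF bij_betw_append_words, symmetric])
  also have "\<dots> = (\<Sum>xs\<in>words k n. \<Sum>ys\<in>words k m. G (xs @ ys))"
    by (subst sum.cartesian_product) (simp add: case_prod_beta)
  finally show ?thesis .
qed

lemma word_avg_append:
  "word_avg k (n + m) G = word_avg k n (\<lambda>xs. word_avg k m (\<lambda>ys. G (xs @ ys)))"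
  unfolding word_avg_def sum_words_append by (simp add: power_add sum_divide_distrib mult.commute)

lemma word_avg_mono:
  assumes "\<And>xs. xs \<in> words k n \<Longrightarrow> G xs \<le> H xs"
  shows "word_avg k n G \<le> word_avg k n H"
  unfolding word_avg_def by (intro divide_right_mono sum_mono assms) auto

lemma word_avg_mult_left: "word_avg k n (\<lambda>xs. c * G xs) = c * word_avg k n G"
  unfolding word_avg_def by (simp add: sum_distrib_left)

lemma word_avg_cong:
  "(\<And>xs. xs \<in> words k n \<Longrightarrow> G xs = H xs) \<Longrightarrow> word_avg k n G = word_avg k n H"
  unfolding word_avg_def by (metis (mono_tags, lifting) sum.cong)

lemma word_avg_add_const:
  assumes "k \<ge> 1"
  shows "word_avg k n (\<lambda>xs. G xs + c) = word_avg k n G + c"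
  unfolding word_avg_def using assms by (simp add: sum.distrib card_words add_divide_distrib)

lemma words_D: "xs \<in> words k n \<Longrightarrow> set xs \<subseteq> {1..k}" "xs \<in> words k n \<Longrightarrow> length xs = n"
  unfolding words_def by auto

lemma length_prefix_word: "length (prefix_word n \<omega>) = n"
  unfolding prefix_word_def by simp

lemma prefix_word_Suc: "prefix_word (Suc n) \<omega> = prefix_word n \<omega> @ [\<omega> (int n)]"
  unfolding prefix_word_def by simp

lemma prefix_word_eq_iff: "prefix_word n \<omega> = xs \<longleftrightarrow> length xs = n \<and> (\<forall>j<n. \<omega> (int j) = xs ! j)"
  unfolding prefix_word_def by (auto simp: list_eq_iff_nth_eq)

lemma prob_space_bernoulli_space: "prob_space (bernoulli_space k)"
  unfolding bernoulli_space_def by (intro prob_space_PiM prob_space_measure_pmf)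

lemma pred_bernoulli_prefix_eq:
  "Measurable.pred (bernoulli_space k) (\<lambda>\<omega>. \<forall>j<n. \<omega> (int j) = xs ! j)"
  unfolding bernoulli_space_def by measurable

lemma cylinder_in_sets_bernoulli_space:
  "{\<omega>\<in>space (bernoulli_space k). prefix_word n \<omega> = xs} \<in> sets (bernoulli_space k)"
proof (cases "length xs = n")
  case True
  then have eq: "{\<omega>\<in>space (bernoulli_space k). prefix_word n \<omega> = xs} =
      {\<omega>\<in>space (bernoulli_space k). \<forall>j<n. \<omega> (int j) = xs ! j}"
    unfolding prefix_word_eq_iff by auto
  show ?thesis unfolding eq using pred_bernoulli_prefix_eq[where k=k and n=n and xs=xs] unfolding pred_def .
next
  case False
  then have eq: "{\<omega>\<in>space (bernoulli_space k). prefix_word n \<omega> = xs} = {}"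
    using length_prefix_word by auto
  show ?thesis unfolding eq by (rule sets.empty_sets)
qed

lemma measure_bernoulli_cylinder:
  assumes "k \<ge> 1" "xs \<in> words k n"
  shows "measure (bernoulli_space k) {\<omega>\<in>space (bernoulli_space k). prefix_word n \<omega> = xs} = 1 / real k ^ n"
proof -
  let ?p = "pmf_of_set {1..k::nat}"
  interpret product_prob_space "\<lambda>_::int. measure_pmf ?p" UNIV by unfold_locales
  have len: "length xs = n" and xs: "set xs \<subseteq> {1..k}" using assms(2) by (auto simp: words_def)
  have cyl: "{\<omega>\<in>space (bernoulli_space k). prefix_word n \<omega> = xs} =
      {\<omega>\<in>space (PiM UNIV (\<lambda>_. measure_pmf ?p)). \<forall>i\<in>int ` {..<n}. \<omega> i \<in> {xs ! nat i}}"
    unfolding prefix_word_eq_iff bernoulli_space_def using len by auto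
  have "emeasure (bernoulli_space k) {\<omega>\<in>space (bernoulli_space k). prefix_word n \<omega> = xs} =
      (\<Prod>i\<in>int ` {..<n}. emeasure (measure_pmf ?p) {xs ! nat i})"
    unfolding cyl unfolding bernoulli_space_def by (rule emeasure_PiM_Collect) auto
  also have "\<dots> = (\<Prod>i\<in>int ` {..<n}. ennreal (1 / real k))"
  proof (rule prod.cong[OF refl])
    fix i assume "i \<in> int ` {..<n}"
    then have "xs ! nat i \<in> {1..k}" using xs len by (auto dest!: nth_mem)
    then show "emeasure (measure_pmf ?p) {xs ! nat i} = ennreal (1 / real k)"
      using assms(1) by (simp add: emeasure_pmf_single pmf_of_set)
  qed
  also have "\<dots> = ennreal ((1 / real k) ^ n)"
    by (simp add: card_image prod_ennreal[symmetric] ennreal_power)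
  finally show ?thesis by (simp add: measure_def power_one_over)
qed

lemma measurable_prefix_word: "prefix_word n \<in> measurable (bernoulli_space k) (count_space UNIV)"
proof (subst measurable_count_space_eq2_countable, intro conjI ballI)
  fix xs :: "nat list"
  show "prefix_word n -` {xs} \<inter> space (bernoulli_space k) \<in> sets (bernoulli_space k)"
    using cylinder_in_sets_bernoulli_space[of k n xs] by (simp add: Int_def vimage_def conj_commute)
qed simp

lemma AE_prefix_word_in_words:
  assumes "k \<ge> 1"
  shows "AE \<omega> in bernoulli_space k. prefix_word n \<omega> \<in> words k n"
proof -
  interpret product_prob_space "\<lambda>_::int. measure_pmf (pmf_of_set {1..k::nat})" UNIV by unfold_locales
  have "set_pmf (pmf_of_set {1..k}) = {1..k}" using assms by simp
  then have "AE i in measure_pmf (pmf_of_set {1..k}). i \<in> {1..k}"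
    using AE_measure_pmf[of "pmf_of_set {1..k}"] by simp
  then have "AE \<omega> in bernoulli_space k. \<omega> (int j) \<in> {1..k}" for j
    unfolding bernoulli_space_def by (intro AE_component) auto
  then have "AE \<omega> in bernoulli_space k. \<forall>j\<in>{..<n}. \<omega> (int j) \<in> {1..k}"
    by (subst AE_finite_all[OF finite_lessThan]) simp
  then show ?thesis by eventually_elim (auto simp: words_def prefix_word_def)
qed

lemma integral_bernoulli_prefix_word:
  fixes G :: "nat list \<Rightarrow> real"
  assumes k: "k \<ge> 1"
  shows "(\<integral>\<omega>. G (prefix_word n \<omega>) \<partial>bernoulli_space k) = word_avg k n G"
proof -
  let ?P = "bernoulli_space k"
  interpret prob_space ?P by (rule prob_space_bernoulli_space)
  define S where "S xs = {\<omega>\<in>space ?P. prefix_word n \<omega> = xs}" for xs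
  have S: "S xs \<in> sets ?P" for xs unfolding S_def by (rule cylinder_in_sets_bernoulli_space)
  have "AE \<omega> in ?P. G (prefix_word n \<omega>) = (\<Sum>xs\<in>words k n. G xs * indicator (S xs) \<omega>)"
    using AE_prefix_word_in_words[OF k, of n]
  proof eventually_elim
    case (elim \<omega>)
    have "(\<Sum>xs\<in>words k n. G xs * indicator (S xs) \<omega>) = (\<Sum>xs\<in>{prefix_word n \<omega>}. G xs * indicator (S xs) \<omega>)"
      by (rule sum.mono_neutral_right) (use elim finite_words in \<open>auto simp: S_def\<close>)
    then show ?case by (simp add: S_def indicator_def space_PiM bernoulli_space_def)
  qed
  then have "(\<integral>\<omega>. G (prefix_word n \<omega>) \<partial>?P) = (\<integral>\<omega>. (\<Sum>xs\<in>words k n. G xs * indicator (S xs) \<omega>) \<partial>?P)"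
    using measurable_compose[OF measurable_prefix_word, of G borel] S
    by (intro integral_cong_AE) (auto intro!: borel_measurable_sum borel_measurable_times)
  also have "\<dots> = (\<Sum>xs\<in>words k n. \<integral>\<omega>. G xs * indicator (S xs) \<omega> \<partial>?P)"
    using S emeasure_finite
    by (intro Bochner_Integration.integral_sum)
       (auto simp: less_top[symmetric] intro!: integrable_mult_right integrable_real_indicator)
  also have "\<dots> = (\<Sum>xs\<in>words k n. G xs / real k ^ n)"
    using S measure_bernoulli_cylinder[OF k] by (intro sum.cong refl) (simp add: S_def)
  also have "\<dots> = word_avg k n G" unfolding word_avg_def by (simp add: sum_divide_distrib)
  finally show ?thesis .
qed

section \<open>Tangent spaces of \<open>C\<^sup>1\<close> submanifolds\<close>

lemma linear_blinfun: "linear (blinfun_apply A)"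
  by (simp add: blinfun.bounded_linear_right bounded_linear.linear)

lemma left_inverse_comp_remainder:
  fixes f :: "'a::real_normed_vector \<Rightarrow> 'b::real_normed_vector"
    and g :: "'c::real_normed_vector \<Rightarrow> 'a" and h :: "'c \<Rightarrow> 'b"
  assumes derf: "(f has_derivative f') (at (g y))"
    and lg': "bounded_linear g'" and inv: "\<And>x. g' (f' x) = x"
    and contg: "continuous (at y) g" and T: "open T" "y \<in> T"
    and fg: "\<And>z. z \<in> T \<Longrightarrow> f (g z) = h z"
    and derh: "(h has_derivative h') (at y)"
    and e: "e > 0"
  shows "\<exists>d>0. \<forall>z. norm (z - y) < d \<longrightarrow>
      norm (g z - g y - g' (h' (z - y))) \<le> e * (norm (g z - g y) + norm (z - y))"
proof -
  interpret f': bounded_linear f' using derf unfolding has_derivative_def by auto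
  interpret g': bounded_linear g' using lg' .
  obtain C where C: "0 < C" "\<And>x. norm (g' x) \<le> norm x * C"
    using g'.pos_bounded by blast
  have eC: "e / C > 0" using e C by simp
  obtain d0 where "0 < d0" and d0:
      "\<And>u. norm (u - g y) < d0 \<Longrightarrow> norm (f u - f (g y) - f' (u - g y)) \<le> e / C * norm (u - g y)"
    using derf eC unfolding has_derivative_at_alt by blast
  obtain d1 where "0 < d1" and d1: "\<And>x. dist x y < d1 \<Longrightarrow> dist (g x) (g y) < d0"
    using contg \<open>0 < d0\<close> unfolding continuous_at_eps_delta by blast
  obtain d2 where "0 < d2" and d2: "\<And>u. dist u y < d2 \<Longrightarrow> u \<in> T"
    using T unfolding open_dist by blast
  obtain d3 where "0 < d3" and d3:
      "\<And>z. norm (z - y) < d3 \<Longrightarrow> norm (h z - h y - h' (z - y)) \<le> e / C * norm (z - y)"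
    using derh eC unfolding has_derivative_at_alt by blast
  show ?thesis
  proof (intro exI[of _ "min d1 (min d2 d3)"] conjI allI impI)
    show "min d1 (min d2 d3) > 0" using \<open>0 < d1\<close> \<open>0 < d2\<close> \<open>0 < d3\<close> by simp
    fix z assume z: "norm (z - y) < min d1 (min d2 d3)"
    define R1 where "R1 = f (g z) - f (g y) - f' (g z - g y)"
    define R2 where "R2 = h z - h y - h' (z - y)"
    have R1: "norm R1 \<le> e / C * norm (g z - g y)"
      unfolding R1_def using d0 d1[of z] z by (simp add: dist_norm)
    have R2: "norm R2 \<le> e / C * norm (z - y)" unfolding R2_def using d3 z by simp
    have "g z - g y = g' (f' (g z - g y))" by (simp add: inv)
    also have "f' (g z - g y) = h' (z - y) + R2 - R1"
      unfolding R1_def R2_def using fg[OF d2[of z]] fg[OF T(2)] z by (simp add: dist_norm algebra_simps)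
    finally have "g z - g y - g' (h' (z - y)) = g' (R2 - R1)"
      by (simp add: g'.add g'.diff)
    then have "norm (g z - g y - g' (h' (z - y))) \<le> norm (R2 - R1) * C" using C(2) by simp
    also have "\<dots> \<le> (norm R2 + norm R1) * C"
      using C(1) norm_triangle_ineq4[of R2 R1] by (simp add: mult_right_mono)
    also have "\<dots> \<le> (e / C * norm (z - y) + e / C * norm (g z - g y)) * C"
      using R1 R2 C(1) by (intro mult_right_mono add_mono) auto
    also have "\<dots> = e * (norm (g z - g y) + norm (z - y))"
      using C(1) by (simp add: field_simps)
    finally show "norm (g z - g y - g' (h' (z - y))) \<le> e * (norm (g z - g y) + norm (z - y))" .
  qed
qed

text \<open>The remainder estimate with \<open>e = 1/2\<close> first shows that \<open>g\<close> is Lipschitz at \<open>y\<close>, which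
  turns it into a genuine \<open>o(|z - y|)\<close> bound.\<close>
lemma has_derivative_left_inverse_comp:
  fixes f :: "'a::real_normed_vector \<Rightarrow> 'b::real_normed_vector"
    and g :: "'c::real_normed_vector \<Rightarrow> 'a" and h :: "'c \<Rightarrow> 'b"
  assumes derf: "(f has_derivative f') (at (g y))"
    and lg': "bounded_linear g'" and inv: "\<And>x. g' (f' x) = x"
    and contg: "continuous (at y) g" and T: "open T" "y \<in> T"
    and fg: "\<And>z. z \<in> T \<Longrightarrow> f (g z) = h z"
    and derh: "(h has_derivative h') (at y)"
  shows "(g has_derivative (\<lambda>z. g' (h' z))) (at y)"
proof -
  have remainder: "\<exists>d>0. \<forall>z. norm (z - y) < d \<longrightarrow>
      norm (g z - g y - g' (h' (z - y))) \<le> e * (norm (g z - g y) + norm (z - y))" if "e > 0" for e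
    using left_inverse_comp_remainder[OF derf lg' inv contg T fg derh that] by blast
  interpret g': bounded_linear g' using lg' .
  have lh': "bounded_linear h'" using derh unfolding has_derivative_def by auto
  interpret h': bounded_linear h' using lh' .
  obtain C where C: "0 < C" "\<And>x. norm (g' x) \<le> norm x * C"
    using g'.pos_bounded by blast
  obtain H where H: "0 < H" "\<And>x. norm (h' x) \<le> norm x * H"
    using h'.pos_bounded by blast
  obtain d where "0 < d" and d: "\<And>z. norm (z - y) < d \<Longrightarrow>
      norm (g z - g y - g' (h' (z - y))) \<le> 1/2 * (norm (g z - g y) + norm (z - y))"
    using remainder[of "1/2"] by auto
  define B where "B = 2 * C * H + 1"
  have "B > 0" unfolding B_def using C(1) H(1) by (simp add: add_pos_pos)
  have lipschitz: "norm (g z - g y) \<le> B * norm (z - y)" if z: "norm (z - y) < d" for z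
  proof -
    have "norm (g z - g y) \<le> norm (g' (h' (z - y))) + norm (g z - g y - g' (h' (z - y)))"
      by (rule norm_triangle_sub)
    also have "\<dots> \<le> norm (z - y) * H * C + 1/2 * (norm (g z - g y) + norm (z - y))"
    proof (rule add_mono)
      have "norm (g' (h' (z - y))) \<le> norm (h' (z - y)) * C" by (rule C(2))
      also have "\<dots> \<le> norm (z - y) * H * C" using H(2)[of "z - y"] C(1) by (simp add: mult_right_mono)
      finally show "norm (g' (h' (z - y))) \<le> norm (z - y) * H * C" .
    qed (rule d[OF z])
    finally show ?thesis unfolding B_def by (simp add: field_simps)
  qed
  show ?thesis
    unfolding has_derivative_at_alt
  proof (intro conjI allI impI)
    show "bounded_linear (\<lambda>z. g' (h' z))"
      using bounded_linear_compose[OF lg' lh'] by (simp add: o_def)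
    fix e :: real assume "e > 0"
    then have e': "e / (B + 1) > 0" using \<open>B > 0\<close> by simp
    obtain d' where "0 < d'" and d': "\<And>z. norm (z - y) < d' \<Longrightarrow>
        norm (g z - g y - g' (h' (z - y))) \<le> e / (B + 1) * (norm (g z - g y) + norm (z - y))"
      using remainder[OF e'] by blast
    show "\<exists>d>0. \<forall>z. norm (z - y) < d \<longrightarrow> norm (g z - g y - g' (h' (z - y))) \<le> e * norm (z - y)"
    proof (intro exI[of _ "min d d'"] conjI allI impI)
      show "min d d' > 0" using \<open>0 < d\<close> \<open>0 < d'\<close> by simp
      fix z assume z: "norm (z - y) < min d d'"
      have "norm (g z - g y - g' (h' (z - y))) \<le> e / (B + 1) * (norm (g z - g y) + norm (z - y))"
        using d' z by simp
      also have "\<dots> \<le> e / (B + 1) * (B * norm (z - y) + norm (z - y))"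
        using lipschitz[of z] z e' by (intro mult_left_mono add_right_mono) auto
      also have "\<dots> = e * norm (z - y)" using \<open>B > 0\<close> by (simp add: field_simps)
      finally show "norm (g z - g y - g' (h' (z - y))) \<le> e * norm (z - y)" .
    qed
  qed
qed

lemma range_subset_tangent_space_chart:
  fixes \<phi> :: "'m::euclidean_space \<Rightarrow> 'a::euclidean_space" and D :: "'m \<Rightarrow>\<^sub>L 'a"
  assumes W: "open W" and hom: "homeomorphism W (M \<inter> U) \<phi> \<psi>"
    and derw0: "(\<phi> has_derivative blinfun_apply D) (at w0)" and w0: "w0 \<in> W"
  shows "range (blinfun_apply D) \<subseteq> tangent_space M (\<phi> w0)"
proof -
  have hom2: "\<phi> ` W = M \<inter> U" using hom unfolding homeomorphism_def by auto
  let ?x = "\<phi> w0"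
  have xMU: "?x \<in> M \<inter> U" using hom2 w0 by blast
  show ?thesis
  proof
    fix v assume "v \<in> range (blinfun_apply D)"
    then obtain u where v: "v = D u" by auto
    define \<gamma> where "\<gamma> t = (if w0 + t *\<^sub>R u \<in> W then \<phi> (w0 + t *\<^sub>R u) else ?x)" for t :: real
    have \<gamma>M: "\<gamma> t \<in> M" for t unfolding \<gamma>_def using hom2 xMU by auto
    have \<gamma>0: "\<gamma> 0 = ?x" unfolding \<gamma>_def using w0 by simp
    have d1: "((\<lambda>t::real. w0 + t *\<^sub>R u) has_derivative (\<lambda>t. t *\<^sub>R u)) (at 0)"
      by (auto intro!: derivative_eq_intros)
    have "((\<lambda>t::real. \<phi> (w0 + t *\<^sub>R u)) has_derivative (\<lambda>t. D (t *\<^sub>R u))) (at 0)"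
      using has_derivative_compose[OF d1, of \<phi> "blinfun_apply D"] derw0 by simp
    then have "((\<lambda>t::real. \<phi> (w0 + t *\<^sub>R u)) has_vector_derivative v) (at 0)"
      unfolding has_vector_derivative_def v by (simp add: blinfun.scaleR_right)
    moreover have "open {t::real. w0 + t *\<^sub>R u \<in> W}"
    proof -
      have "continuous_on UNIV (\<lambda>t::real. w0 + t *\<^sub>R u)" by (intro continuous_intros)
      from open_vimage[OF W this] show ?thesis by (simp add: vimage_def)
    qed
    ultimately have "(\<gamma> has_vector_derivative v) (at 0)"
      by (rule has_vector_derivative_transform_within_open) (auto simp: \<gamma>_def w0)
    then show "v \<in> tangent_space M ?x"
      unfolding tangent_space_def using \<gamma>M \<gamma>0 by blast
  qed
qed

lemma tangent_space_subset_range_chart: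
  fixes \<phi> :: "'m::euclidean_space \<Rightarrow> 'a::euclidean_space"
    and D :: "'m \<Rightarrow> ('m \<Rightarrow>\<^sub>L 'a)"
  assumes U: "open U" and W: "open W" and hom: "homeomorphism W (M \<inter> U) \<phi> \<psi>"
    and der: "\<And>w. w \<in> W \<Longrightarrow> (\<phi> has_derivative blinfun_apply (D w)) (at w) \<and> inj (blinfun_apply (D w))"
    and w0: "w0 \<in> W"
  shows "tangent_space M (\<phi> w0) \<subseteq> range (blinfun_apply (D w0))"
proof -
  have \<psi>\<phi>: "\<And>w. w \<in> W \<Longrightarrow> \<psi> (\<phi> w) = w" and \<phi>W: "\<phi> ` W = M \<inter> U"
    and \<phi>\<psi>: "\<And>y. y \<in> M \<inter> U \<Longrightarrow> \<phi> (\<psi> y) = y" and cont_\<psi>: "continuous_on (M \<inter> U) \<psi>"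
    using hom unfolding homeomorphism_def by auto
  let ?x = "\<phi> w0"
  have xMU: "?x \<in> M \<inter> U" using \<phi>W w0 by blast
  have derw0: "(\<phi> has_derivative blinfun_apply (D w0)) (at w0)" using der w0 by blast
  show ?thesis
  proof
    fix v assume "v \<in> tangent_space M ?x"
    then obtain \<gamma> :: "real \<Rightarrow> 'a" where \<gamma>M: "\<And>t. \<gamma> t \<in> M" and \<gamma>0: "\<gamma> 0 = ?x"
      and d\<gamma>: "(\<gamma> has_vector_derivative v) (at 0)"
      unfolding tangent_space_def by blast
    have lin: "linear (blinfun_apply (D w0))" by (rule linear_blinfun)
    have injD: "inj (blinfun_apply (D w0))" using der w0 by blast
    obtain L where L: "linear L" "L \<circ> blinfun_apply (D w0) = id"
      using linear_injective_left_inverse[OF lin injD] by blast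
    have bL: "bounded_linear L" using L(1) by (simp add: linear_conv_bounded_linear)
    have Linv: "L (D w0 z) = z" for z using L(2) by (metis comp_apply id_apply)
    have cont\<gamma>: "continuous (at 0) \<gamma>" using has_vector_derivative_continuous[OF d\<gamma>] .
    obtain \<delta> where \<delta>: "\<delta> > 0" "\<And>t. dist t 0 < \<delta> \<Longrightarrow> \<gamma> t \<in> U"
    proof -
      obtain e where "e > 0" "ball ?x e \<subseteq> U" using U xMU open_contains_ball by blast
      moreover obtain d where "d > 0" "\<And>t. dist t 0 < d \<Longrightarrow> dist (\<gamma> t) (\<gamma> 0) < e"
        using cont\<gamma> \<open>e > 0\<close> unfolding continuous_at_eps_delta by blast
      ultimately show thesis using that[of d] \<gamma>0 by (auto simp: dist_commute subset_iff)
    qed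
    define c where "c t = \<psi> (\<gamma> t)" for t
    have c0: "c 0 = w0" unfolding c_def \<gamma>0 using \<psi>\<phi> w0 by simp
    have ev: "eventually (\<lambda>t. \<gamma> t \<in> M \<inter> U) (at 0)"
      using \<delta> \<gamma>M unfolding eventually_at by (auto intro!: exI[of _ \<delta>])
    have "((\<lambda>t. \<psi> (\<gamma> t)) \<longlongrightarrow> \<psi> ?x) (at 0)"
      by (rule continuous_within_tendsto_compose[OF _ ev])
         (use cont_\<psi> xMU cont\<gamma> \<gamma>0 in \<open>auto simp: continuous_on_eq_continuous_within continuous_at\<close>)
    then have contc: "continuous (at 0) c" unfolding continuous_at c_def using \<gamma>0 by simp
    have fg: "\<phi> (c z) = \<gamma> z" if "z \<in> ball 0 \<delta>" for z
      unfolding c_def using \<phi>\<psi> \<gamma>M \<delta>(2)[of z] that by (simp add: dist_commute)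
    have dh: "(\<gamma> has_derivative (\<lambda>t. t *\<^sub>R v)) (at 0)"
      using d\<gamma> unfolding has_vector_derivative_def .
    have dc: "(c has_derivative (\<lambda>z. L (z *\<^sub>R v))) (at 0)"
      by (rule has_derivative_left_inverse_comp[where f=\<phi> and f'="blinfun_apply (D w0)" and h=\<gamma> and T="ball 0 \<delta>"])
         (use derw0 c0 bL Linv contc \<delta> fg dh in auto)
    have "((\<lambda>t. \<phi> (c t)) has_derivative (\<lambda>z. D w0 (L (z *\<^sub>R v)))) (at 0)"
      using has_derivative_compose[OF dc, of \<phi> "blinfun_apply (D w0)"] derw0 c0 by simp
    then have "(\<gamma> has_derivative (\<lambda>z. D w0 (L (z *\<^sub>R v)))) (at 0)"
      by (rule has_derivative_transform_within_open[where s="ball 0 \<delta>"]) (use \<delta> fg in auto)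
    then have "(\<lambda>z. D w0 (L (z *\<^sub>R v))) = (\<lambda>t. t *\<^sub>R v)"
      using dh has_derivative_unique by blast
    then have "D w0 (L v) = v" by (metis scaleR_one)
    then show "v \<in> range (blinfun_apply (D w0))" by (metis rangeI)
  qed
qed

lemma tangent_space_chart:
  fixes \<phi> :: "'m::euclidean_space \<Rightarrow> 'a::euclidean_space"
    and D :: "'m \<Rightarrow> ('m \<Rightarrow>\<^sub>L 'a)"
  assumes U: "open U" and W: "open W" and hom: "homeomorphism W (M \<inter> U) \<phi> \<psi>"
    and der: "\<And>w. w \<in> W \<Longrightarrow> (\<phi> has_derivative blinfun_apply (D w)) (at w) \<and> inj (blinfun_apply (D w))"
    and w0: "w0 \<in> W"
  shows "tangent_space M (\<phi> w0) = range (blinfun_apply (D w0))"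
  using range_subset_tangent_space_chart[OF W hom _ w0] tangent_space_subset_range_chart[OF assms] der w0
  by blast

lemma C1_submanifold_chart:
  fixes M :: "'a::euclidean_space set"
  assumes "C1_submanifold TYPE('m) M" "x \<in> M"
  obtains U W \<phi> \<psi> and D :: "'m::euclidean_space \<Rightarrow> ('m \<Rightarrow>\<^sub>L 'a)" where
    "open U" "x \<in> U" "open W" "homeomorphism W (M \<inter> U) \<phi> \<psi>"
    "\<And>w. w \<in> W \<Longrightarrow> (\<phi> has_derivative blinfun_apply (D w)) (at w) \<and> inj (blinfun_apply (D w))"
    "continuous_on W D"
  using assms unfolding C1_submanifold_def by metis

lemma tangent_space_range:
  fixes M :: "'a::euclidean_space set" and D :: "'m::euclidean_space \<Rightarrow> ('m \<Rightarrow>\<^sub>L 'a)"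
  assumes "open U" "open W" "homeomorphism W (M \<inter> U) \<phi> \<psi>"
    "\<And>w. w \<in> W \<Longrightarrow> (\<phi> has_derivative blinfun_apply (D w)) (at w) \<and> inj (blinfun_apply (D w))"
    "y \<in> M \<inter> U"
  shows "tangent_space M y = range (blinfun_apply (D (\<psi> y)))" "\<psi> y \<in> W"
proof -
  have "\<psi> y \<in> W" "\<phi> (\<psi> y) = y" using assms(3,5) unfolding homeomorphism_def by auto
  then show "tangent_space M y = range (blinfun_apply (D (\<psi> y)))" "\<psi> y \<in> W"
    using tangent_space_chart[OF assms(1-4), of "\<psi> y"] by auto
qed

lemma dim_range_inj:
  fixes D :: "'m::euclidean_space \<Rightarrow>\<^sub>L 'a::euclidean_space"
  assumes "inj (blinfun_apply D)"
  shows "dim (range (blinfun_apply D)) = DIM('m)"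
proof -
  have lin: "linear (blinfun_apply D)" by (rule linear_blinfun)
  have "independent (blinfun_apply D ` Basis)"
    by (rule linear_independent_injective_image[OF lin independent_Basis inj_on_subset[OF assms subset_UNIV]])
  moreover have "span (blinfun_apply D ` Basis) = range (blinfun_apply D)"
    using span_linear_image[OF lin, of Basis] by (simp add: span_Basis)
  moreover have "card (blinfun_apply D ` Basis) = DIM('m)"
    using card_image[OF inj_on_subset[OF assms subset_UNIV]] by simp
  ultimately show ?thesis
    by (metis dim_eq_card_independent dim_span)
qed

lemma tangent_space_subspace_dim:
  fixes M :: "'a::euclidean_space set"
  assumes "C1_submanifold TYPE('m::euclidean_space) M" "x \<in> M"
  shows "subspace (tangent_space M x)" "dim (tangent_space M x) = DIM('m)"
proof -
  obtain U W \<phi> \<psi> and D :: "'m \<Rightarrow> ('m \<Rightarrow>\<^sub>L 'a)" where ch: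
    "open U" "x \<in> U" "open W" "homeomorphism W (M \<inter> U) \<phi> \<psi>"
    "\<And>w. w \<in> W \<Longrightarrow> (\<phi> has_derivative blinfun_apply (D w)) (at w) \<and> inj (blinfun_apply (D w))"
    "continuous_on W D"
    using C1_submanifold_chart[OF assms] by blast
  have xMU: "x \<in> M \<inter> U" using assms ch by auto
  note tr = tangent_space_range[OF ch(1,3,4,5) xMU]
  have lin: "linear (blinfun_apply (D (\<psi> x)))" by (rule linear_blinfun)
  show "subspace (tangent_space M x)"
    using tr(1) linear_subspace_image[OF lin subspace_UNIV] by simp
  have "dim (range (blinfun_apply (D (\<psi> x)))) = DIM('m)"
    by (rule dim_range_inj) (use ch(5) tr(2) in blast)
  then show "dim (tangent_space M x) = DIM('m)" using tr(1) by simp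
qed

lemma infdist_range_blinfun_le:
  fixes D D0 :: "'m::real_normed_vector \<Rightarrow>\<^sub>L 'a::real_normed_vector"
  assumes m: "0 < m" "\<And>u. m * norm u \<le> norm (D0 u)" and close: "norm (D - D0) < m / 2"
    and v: "v \<in> range (blinfun_apply D)"
  shows "infdist v (range (blinfun_apply D0)) \<le> norm (D - D0) * (2 / m * norm v)"
proof -
  obtain u where u: "v = D u" using v by auto
  have nd: "norm (D u - D0 u) \<le> norm (D - D0) * norm u"
    using norm_blinfun[of "D - D0" u] by (simp add: blinfun.diff_left)
  have "m * norm u \<le> norm (D0 u)" by (rule m(2))
  also have "\<dots> \<le> norm (D u) + norm (D u - D0 u)"
    by (metis norm_triangle_sub norm_minus_commute add.commute)
  also have "\<dots> \<le> norm v + m / 2 * norm u"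
    using nd close u by (smt (verit) mult_right_mono norm_ge_zero)
  finally have un: "norm u \<le> 2 / m * norm v" using m(1) by (simp add: field_simps)
  have "infdist v (range (blinfun_apply D0)) \<le> dist v (D0 u)" by (rule infdist_le) simp
  also have "\<dots> \<le> norm (D - D0) * norm u" using nd by (simp add: u dist_norm)
  also have "\<dots> \<le> norm (D - D0) * (2 / m * norm v)" by (rule mult_left_mono[OF un norm_ge_zero])
  finally show ?thesis .
qed

text \<open>In a chart \<open>\<phi>\<close> the tangent spaces are the ranges of \<open>D \<phi>\<close>; near \<open>x\<close> these ranges are uniformly
  close to \<open>T\<^sub>x M\<close> because \<open>D\<close> is continuous and \<open>D (\<psi> x)\<close> is injective.\<close>
lemma tangent_bundle_closed:
  fixes M :: "'a::euclidean_space set"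
  assumes man: "C1_submanifold TYPE('m::euclidean_space) M" and x: "x \<in> M"
    and xs: "\<And>j. xs j \<in> M" "xs \<longlonglongrightarrow> x"
    and vs: "\<And>j. vs j \<in> tangent_space M (xs j)" "vs \<longlonglongrightarrow> v"
  shows "v \<in> tangent_space M x"
proof -
  obtain U W \<phi> \<psi> and D :: "'m \<Rightarrow> ('m \<Rightarrow>\<^sub>L 'a)" where ch:
    "open U" "x \<in> U" "open W" "homeomorphism W (M \<inter> U) \<phi> \<psi>"
    "\<And>w. w \<in> W \<Longrightarrow> (\<phi> has_derivative blinfun_apply (D w)) (at w) \<and> inj (blinfun_apply (D w))"
    "continuous_on W D"
    using C1_submanifold_chart[OF man x] by blast
  have xMU: "x \<in> M \<inter> U" using x ch by auto
  note trx = tangent_space_range[OF ch(1,3,4,5) xMU]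
  define w0 where "w0 = \<psi> x"
  define R where "R = range (blinfun_apply (D w0))"
  have lin: "linear (blinfun_apply (D w0))" by (rule linear_blinfun)
  have injD: "inj (blinfun_apply (D w0))" using ch(5) trx(2) unfolding w0_def by blast
  obtain m where m: "m > 0" "\<And>u. m * norm u \<le> norm (D w0 u)"
    using linear_inj_bounded_below_pos[OF lin injD] by blast
  have Rcl: "closed R"
    unfolding R_def using closed_subspace linear_subspace_image[OF lin subspace_UNIV] by simp
  have evU: "eventually (\<lambda>j. xs j \<in> M \<inter> U) sequentially"
    using topological_tendstoD[OF xs(2) ch(1,2)] xs(1) by (auto elim: eventually_mono)
  have cont\<psi>: "continuous (at x within M \<inter> U) \<psi>"
    using ch(4) xMU unfolding homeomorphism_def continuous_on_eq_continuous_within by auto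
  have ws: "(\<lambda>j. \<psi> (xs j)) \<longlonglongrightarrow> w0"
    unfolding w0_def by (rule continuous_within_tendsto_compose[OF cont\<psi> evU xs(2)])
  have "isCont D w0" using ch(6) ch(3) trx(2) by (simp add: continuous_on_eq_continuous_at w0_def)
  from isCont_tendsto_compose[OF this ws] have Dn: "(\<lambda>j. norm (D (\<psi> (xs j)) - D w0)) \<longlonglongrightarrow> 0"
    using tendsto_norm_zero[OF LIM_zero] by blast
  have "eventually (\<lambda>j. norm (D (\<psi> (xs j)) - D w0) < m / 2) sequentially"
    using order_tendstoD(2)[OF Dn, of "m/2"] m(1) by simp
  with evU have bound: "eventually (\<lambda>j. norm (infdist (vs j) R) \<le> norm (D (\<psi> (xs j)) - D w0) * (2 / m * norm (vs j)))
      sequentially"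
  proof eventually_elim
    case (elim j)
    have "vs j \<in> range (blinfun_apply (D (\<psi> (xs j))))"
      using vs(1)[of j] tangent_space_range(1)[OF ch(1,3,4,5) elim(1)] by simp
    from infdist_range_blinfun_le[OF m elim(2) this] show ?case
      unfolding R_def real_norm_def using infdist_nonneg by (metis abs_of_nonneg)
  qed
  have "(\<lambda>j. norm (D (\<psi> (xs j)) - D w0) * (2 / m * norm (vs j))) \<longlonglongrightarrow> 0 * (2 / m * norm v)"
    by (intro tendsto_intros Dn vs(2))
  then have "(\<lambda>j. infdist (vs j) R) \<longlonglongrightarrow> 0"
    using Lim_null_comparison[OF bound] by simp
  moreover have "(\<lambda>j. infdist (vs j) R) \<longlonglongrightarrow> infdist v R" by (intro tendsto_intros vs(2))
  ultimately have "infdist v R = 0" using LIMSEQ_unique by blast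
  then have "v \<in> R" using in_closed_iff_infdist_zero[OF Rcl] by (simp add: R_def)
  then show ?thesis using trx(1) unfolding R_def w0_def by simp
qed

section \<open>Compositions of the IFS along words\<close>

text \<open>Letters act from left to right, as in \<open>fiter f \<omega> n = f (\<omega> (n - 1)) \<circ> \<dots> \<circ> f (\<omega> 0)\<close>.\<close>
primrec word_map :: "(nat \<Rightarrow> 'a \<Rightarrow> 'a) \<Rightarrow> nat list \<Rightarrow> 'a \<Rightarrow> 'a" where
  "word_map f [] = id"
| "word_map f (a # xs) = word_map f xs \<circ> f a"

primrec word_deriv :: "(nat \<Rightarrow> 'a \<Rightarrow> 'a) \<Rightarrow> (nat \<Rightarrow> 'a \<Rightarrow> ('a::real_normed_vector \<Rightarrow>\<^sub>L 'a)) \<Rightarrow> nat list \<Rightarrow> 'a \<Rightarrow> ('a \<Rightarrow>\<^sub>L 'a)" where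
  "word_deriv f Df [] x = id_blinfun"
| "word_deriv f Df (a # xs) x = word_deriv f Df xs (f a x) o\<^sub>L Df a x"

primrec word_deriv_inv :: "(nat \<Rightarrow> 'a \<Rightarrow> 'a) \<Rightarrow> (nat \<Rightarrow> 'a \<Rightarrow> ('a::real_normed_vector \<Rightarrow>\<^sub>L 'a)) \<Rightarrow> nat list \<Rightarrow> 'a \<Rightarrow> ('a \<Rightarrow>\<^sub>L 'a)" where
  "word_deriv_inv f Dh [] x = id_blinfun"
| "word_deriv_inv f Dh (a # xs) x = Dh a (f a x) o\<^sub>L word_deriv_inv f Dh xs (f a x)"

lemma word_map_append: "word_map f (xs @ ys) = word_map f ys \<circ> word_map f xs"
  by (induction xs) auto

lemma word_map_snoc: "word_map f (xs @ [a]) = f a \<circ> word_map f xs"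
  by (simp add: word_map_append)

lemma fiter_eq_word_map: "fiter f \<omega> n = word_map f (prefix_word n \<omega>)"
  by (induction n) (auto simp: prefix_word_Suc word_map_snoc prefix_word_def)

lemma blinfun_compose_assoc: "(a o\<^sub>L b) o\<^sub>L c = a o\<^sub>L (b o\<^sub>L c)"
  by (rule blinfun_eqI) simp

lemma word_deriv_append: "word_deriv f Df (xs @ ys) x = word_deriv f Df ys (word_map f xs x) o\<^sub>L word_deriv f Df xs x"
proof (induction xs arbitrary: x)
  case Nil
  show ?case by (auto intro: blinfun_eqI)
qed (auto simp: blinfun_compose_assoc)

lemma has_vector_derivative_compose_blinfun:
  assumes "(\<gamma> has_vector_derivative v) (at 0)" "(g has_derivative blinfun_apply G) (at (\<gamma> 0))"
  shows "((\<lambda>t. g (\<gamma> t)) has_vector_derivative G v) (at 0)"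
proof -
  have "(\<gamma> has_derivative (\<lambda>t. t *\<^sub>R v)) (at 0)" using assms(1) unfolding has_vector_derivative_def .
  from has_derivative_compose[OF this assms(2)]
  show ?thesis unfolding has_vector_derivative_def by (simp add: blinfun.scaleR_right)
qed

locale C1_IFS =
  fixes M :: "'a::euclidean_space set" and f :: "nat \<Rightarrow> 'a \<Rightarrow> 'a" and k :: nat
    and Df :: "nat \<Rightarrow> 'a \<Rightarrow> ('a \<Rightarrow>\<^sub>L 'a)" and h :: "nat \<Rightarrow> 'a \<Rightarrow> 'a"
    and Dh :: "nat \<Rightarrow> 'a \<Rightarrow> ('a \<Rightarrow>\<^sub>L 'a)" and d :: nat
  assumes compactM: "compact M"
    and fder: "\<And>i y. i \<in> {1..k} \<Longrightarrow> (f i has_derivative blinfun_apply (Df i y)) (at y)"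
    and fcont: "\<And>i. i \<in> {1..k} \<Longrightarrow> continuous_on UNIV (Df i)"
    and fM: "\<And>i x. i \<in> {1..k} \<Longrightarrow> x \<in> M \<Longrightarrow> f i x \<in> M"
    and hder: "\<And>i y. i \<in> {1..k} \<Longrightarrow> (h i has_derivative blinfun_apply (Dh i y)) (at y)"
    and hcont: "\<And>i. i \<in> {1..k} \<Longrightarrow> continuous_on UNIV (Dh i)"
    and hf: "\<And>i x. i \<in> {1..k} \<Longrightarrow> x \<in> M \<Longrightarrow> h i (f i x) = x"
    and Tsub: "\<And>x. x \<in> M \<Longrightarrow> subspace (tangent_space M x)"
    and Tdim: "\<And>x. x \<in> M \<Longrightarrow> dim (tangent_space M x) = d"
    and Tclosed: "\<And>x xs vs v. x \<in> M \<Longrightarrow> (\<And>j. xs j \<in> M) \<Longrightarrow> xs \<longlonglongrightarrow> x \<Longrightarrow>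
        (\<And>j. vs j \<in> tangent_space M (xs j)) \<Longrightarrow> vs \<longlonglongrightarrow> v \<Longrightarrow> v \<in> tangent_space M x"
begin

abbreviation "T \<equiv> tangent_space M"
abbreviation "W \<equiv> word_map f"
abbreviation "DW \<equiv> word_deriv f Df"
abbreviation "DW_inv \<equiv> word_deriv_inv f Dh"

lemma continuous_on_f: "i \<in> {1..k} \<Longrightarrow> continuous_on UNIV (f i)"
  using fder by (meson continuous_at_imp_continuous_on has_derivative_continuous)

lemma word_map_in_M: "set xs \<subseteq> {1..k} \<Longrightarrow> x \<in> M \<Longrightarrow> W xs x \<in> M"
  by (induction xs arbitrary: x) (auto simp: fM)

lemma word_map_has_derivative: "set xs \<subseteq> {1..k} \<Longrightarrow> (W xs has_derivative blinfun_apply (DW xs x)) (at x)"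
proof (induction xs arbitrary: x)
  case Nil
  then show ?case by (simp add: id_def)
next
  case (Cons a xs)
  have "((\<lambda>y. W xs (f a y)) has_derivative (\<lambda>y. DW xs (f a x) (Df a x y))) (at x)"
    using has_derivative_compose[OF fder[of a x] Cons.IH[of "f a x"]] Cons.prems by auto
  then show ?case by (simp add: o_def)
qed

lemma Dmap_word_map: "set xs \<subseteq> {1..k} \<Longrightarrow> Dmap (W xs) x = blinfun_apply (DW xs x)"
  unfolding Dmap_def using frechet_derivative_at[OF word_map_has_derivative] by metis

lemma continuous_on_word_map: "set xs \<subseteq> {1..k} \<Longrightarrow> continuous_on UNIV (W xs)"
  using word_map_has_derivative by (meson continuous_at_imp_continuous_on has_derivative_continuous)

lemma continuous_on_word_deriv: "set xs \<subseteq> {1..k} \<Longrightarrow> continuous_on UNIV (DW xs)"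
proof (induction xs)
  case Nil
  then show ?case by simp
next
  case (Cons a xs)
  have c1: "continuous_on UNIV (\<lambda>x. DW xs (f a x))"
    by (rule continuous_on_compose2[of UNIV _ UNIV]) (use Cons continuous_on_f in auto)
  have c2: "continuous_on UNIV (Df a)" using fcont Cons.prems by auto
  show ?case using c1 c2 by (simp add: continuous_intros)
qed

lemma Df_tangent:
  assumes "i \<in> {1..k}" "x \<in> M" "v \<in> T x"
  shows "Df i x v \<in> T (f i x)"
proof -
  obtain \<gamma> where \<gamma>: "\<And>t. \<gamma> t \<in> M" "\<gamma> 0 = x" "(\<gamma> has_vector_derivative v) (at 0)"
    using assms(3) unfolding tangent_space_def by blast
  have "((\<lambda>t. f i (\<gamma> t)) has_vector_derivative Df i x v) (at 0)"
    by (rule has_vector_derivative_compose_blinfun[OF \<gamma>(3)]) (use fder assms(1) \<gamma>(2) in auto)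
  moreover have "\<And>t. f i (\<gamma> t) \<in> M" using \<gamma>(1) fM assms(1) by auto
  ultimately show ?thesis unfolding tangent_space_def using \<gamma>(2)
    by (intro CollectI exI[of _ "\<lambda>t. f i (\<gamma> t)"]) auto
qed

lemma Dh_Df:
  assumes "i \<in> {1..k}" "x \<in> M" "v \<in> T x"
  shows "Dh i (f i x) (Df i x v) = v"
proof -
  obtain \<gamma> where \<gamma>: "\<And>t. \<gamma> t \<in> M" "\<gamma> 0 = x" "(\<gamma> has_vector_derivative v) (at 0)"
    using assms(3) unfolding tangent_space_def by blast
  have d1: "((\<lambda>t. f i (\<gamma> t)) has_vector_derivative Df i x v) (at 0)"
    by (rule has_vector_derivative_compose_blinfun[OF \<gamma>(3)]) (use fder assms(1) \<gamma>(2) in auto)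
  have "((\<lambda>t. h i (f i (\<gamma> t))) has_vector_derivative Dh i (f i x) (Df i x v)) (at 0)"
    by (rule has_vector_derivative_compose_blinfun[OF d1]) (use hder assms(1) \<gamma>(2) in auto)
  moreover have "(\<lambda>t. h i (f i (\<gamma> t))) = \<gamma>" using hf assms(1) \<gamma>(1) by auto
  ultimately show ?thesis using \<gamma>(3) vector_derivative_unique_at by metis
qed

lemma word_deriv_tangent: "set xs \<subseteq> {1..k} \<Longrightarrow> x \<in> M \<Longrightarrow> v \<in> T x \<Longrightarrow> DW xs x v \<in> T (W xs x)"
  by (induction xs arbitrary: x v) (auto simp: Df_tangent fM)

lemma word_deriv_inv_word_deriv: "set xs \<subseteq> {1..k} \<Longrightarrow> x \<in> M \<Longrightarrow> v \<in> T x \<Longrightarrow> DW_inv xs x (DW xs x v) = v"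
  by (induction xs arbitrary: x v) (auto simp: Df_tangent fM Dh_Df)

lemma deriv_bound_exists: "\<exists>L\<ge>1. \<forall>i\<in>{1..k}. \<forall>x\<in>M. norm (Df i x) \<le> L \<and> norm (Dh i (f i x)) \<le> L"
proof -
  define K where "K = (\<Union>i\<in>{1..k}. (\<lambda>x. norm (Df i x)) ` M \<union> (\<lambda>x. norm (Dh i (f i x))) ` M)"
  have "compact K" unfolding K_def
  proof (intro compact_UN compact_Un)
    fix i assume i: "i \<in> {1..k}"
    show "compact ((\<lambda>x. norm (Df i x)) ` M)"
      by (rule compact_continuous_image[OF _ compactM]) (use fcont[OF i] in \<open>auto intro: continuous_on_subset continuous_intros\<close>)
    have "continuous_on UNIV (\<lambda>x. Dh i (f i x))"
      by (rule continuous_on_compose2[of UNIV _ UNIV]) (use hcont[OF i] continuous_on_f[OF i] in auto)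
    then show "compact ((\<lambda>x. norm (Dh i (f i x))) ` M)"
      by (intro compact_continuous_image[OF _ compactM]) (auto intro: continuous_on_subset continuous_intros)
  qed simp
  then obtain B where B: "\<And>y. y \<in> K \<Longrightarrow> norm y \<le> B" using compact_imp_bounded bounded_iff by metis
  show ?thesis
    by (rule exI[of _ "max 1 B"]) (use B in \<open>force simp: K_def\<close>)
qed

end

locale C1_IFS_subspaces = C1_IFS +
  fixes r :: nat
  assumes r1: "1 \<le> r" and rd: "r < d"
begin

definition tangent_subspace :: "'a \<Rightarrow> 'a set \<Rightarrow> bool" where
  "tangent_subspace x E \<longleftrightarrow> x \<in> M \<and> subspace E \<and> E \<subseteq> T x \<and> dim E = r"

definition transv_deriv :: "'a \<Rightarrow> 'a set \<Rightarrow> nat list \<Rightarrow> real" where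
  "transv_deriv x E xs = transv_norm (T x) (T (W xs x)) E (blinfun_apply (DW xs x))"

definition conorm_deriv :: "'a \<Rightarrow> 'a set \<Rightarrow> nat list \<Rightarrow> real" where
  "conorm_deriv x E xs = conorm E (blinfun_apply (DW xs x))"

definition deriv_bound :: real where
  "deriv_bound = (SOME L. L \<ge> 1 \<and> (\<forall>i\<in>{1..k}. \<forall>x\<in>M. norm (Df i x) \<le> L \<and> norm (Dh i (f i x)) \<le> L))"

lemma deriv_bound: "deriv_bound \<ge> 1" "\<And>i x. i \<in> {1..k} \<Longrightarrow> x \<in> M \<Longrightarrow> norm (Df i x) \<le> deriv_bound"
  "\<And>i x. i \<in> {1..k} \<Longrightarrow> x \<in> M \<Longrightarrow> norm (Dh i (f i x)) \<le> deriv_bound"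
  using someI_ex[OF deriv_bound_exists] unfolding deriv_bound_def by auto

lemma norm_word_deriv_le: "set xs \<subseteq> {1..k} \<Longrightarrow> x \<in> M \<Longrightarrow> norm (DW xs x) \<le> deriv_bound ^ length xs"
proof (induction xs arbitrary: x)
  case Nil
  then show ?case by simp
next
  case (Cons a xs)
  have "norm (DW (a # xs) x) \<le> norm (DW xs (f a x)) * norm (Df a x)"
    by (simp add: norm_blinfun_compose)
  also have "\<dots> \<le> deriv_bound ^ length xs * deriv_bound"
    using Cons fM deriv_bound by (intro mult_mono) auto
  finally show ?case by (simp add: mult.commute)
qed

lemma norm_word_deriv_inv_le: "set xs \<subseteq> {1..k} \<Longrightarrow> x \<in> M \<Longrightarrow> norm (DW_inv xs x) \<le> deriv_bound ^ length xs"
proof (induction xs arbitrary: x)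
  case Nil
  then show ?case by simp
next
  case (Cons a xs)
  have "norm (DW_inv (a # xs) x) \<le> norm (Dh a (f a x)) * norm (DW_inv xs (f a x))"
    by (simp add: norm_blinfun_compose)
  also have "\<dots> \<le> deriv_bound * deriv_bound ^ length xs"
    using Cons fM deriv_bound by (intro mult_mono) auto
  finally show ?case by simp
qed

lemma word_deriv_nonzero:
  assumes "set xs \<subseteq> {1..k}" "x \<in> M" "u \<in> T x" "u \<noteq> 0"
  shows "DW xs x u \<noteq> 0"
  using word_deriv_inv_word_deriv[OF assms(1-3)] assms(4) by (metis blinfun.zero_right)

lemma tangent_subspace_word_deriv:
  assumes "tangent_subspace x E" "set xs \<subseteq> {1..k}"
  shows "tangent_subspace (W xs x) (blinfun_apply (DW xs x) ` E)"
proof -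
  have x: "x \<in> M" and E: "subspace E" "E \<subseteq> T x" "dim E = r" using assms(1) unfolding tangent_subspace_def by auto
  have "W xs x \<in> M" using word_map_in_M assms(2) x by blast
  moreover have "subspace (blinfun_apply (DW xs x) ` E)" by (rule linear_subspace_image[OF linear_blinfun E(1)])
  moreover have "blinfun_apply (DW xs x) ` E \<subseteq> T (W xs x)" using word_deriv_tangent assms(2) x E(2) by blast
  moreover have "dim (blinfun_apply (DW xs x) ` E) = dim E"
  proof (rule dim_image_eq[OF linear_blinfun])
    have "span E = E" using E(1) by (simp add: span_eq_iff)
    then show "inj_on (blinfun_apply (DW xs x)) (span E)"
      using word_deriv_inv_word_deriv[OF assms(2) x] E(2) unfolding inj_on_def by (metis subsetD)
  qed
  ultimately show ?thesis unfolding tangent_subspace_def using E by simp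
qed

lemma unit_vecs_orth_compl_nonempty: "tangent_subspace x E \<Longrightarrow> unit_vecs (orth_compl_in (T x) E) \<noteq> {}"
proof -
  assume g: "tangent_subspace x E"
  then have x: "x \<in> M" and E: "subspace E" "E \<subseteq> T x" "dim E = r" unfolding tangent_subspace_def by auto
  obtain v where "v \<in> orth_compl_in (T x) E" "v \<noteq> 0"
    using orth_compl_in_nonzero[OF Tsub[OF x] E(1,2)] E(3) Tdim[OF x] rd by auto
  then show ?thesis using unit_vecs_nonempty[OF subspace_orth_compl_in[OF Tsub[OF x]]] by blast
qed

lemma unit_vecs_tangent_subspace_nonempty: "tangent_subspace x E \<Longrightarrow> unit_vecs E \<noteq> {}"
  using unit_vecs_nonempty_dim r1 unfolding tangent_subspace_def by auto

lemma word_deriv_image_tangent_space: "tangent_subspace x E \<Longrightarrow> set xs \<subseteq> {1..k} \<Longrightarrow> blinfun_apply (DW xs x) ` T x \<subseteq> T (W xs x)"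
  using word_deriv_tangent unfolding tangent_subspace_def by blast

lemma transv_deriv_le: "tangent_subspace x E \<Longrightarrow> set xs \<subseteq> {1..k} \<Longrightarrow> transv_deriv x E xs \<le> deriv_bound ^ length xs"
  unfolding transv_deriv_def
proof (rule transv_norm_le_bound[OF Tsub])
  assume g: "tangent_subspace x E" and xs: "set xs \<subseteq> {1..k}"
  show "W xs x \<in> M" using g xs word_map_in_M unfolding tangent_subspace_def by blast
  show "norm (DW xs x y) \<le> deriv_bound ^ length xs * norm y" for y
    using norm_blinfun[of "DW xs x" y] norm_word_deriv_le[OF xs] g unfolding tangent_subspace_def
    by (meson mult_right_mono norm_ge_zero order_trans)
  show "unit_vecs (orth_compl_in (T x) E) \<noteq> {}" by (rule unit_vecs_orth_compl_nonempty[OF g])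
qed

lemma transv_deriv_ge: "tangent_subspace x E \<Longrightarrow> set xs \<subseteq> {1..k} \<Longrightarrow> 1 / deriv_bound ^ length xs \<le> transv_deriv x E xs"
  unfolding transv_deriv_def
proof (rule transv_norm_ge_inverse[OF _ _ _ _ linear_blinfun linear_blinfun])
  assume g: "tangent_subspace x E" and xs: "set xs \<subseteq> {1..k}"
  have x: "x \<in> M" using g unfolding tangent_subspace_def by auto
  show "subspace (T x)" using Tsub x by blast
  show "subspace (T (W xs x))" using Tsub word_map_in_M xs x by blast
  show "subspace E" "E \<subseteq> T x" using g unfolding tangent_subspace_def by auto
  show "blinfun_apply (DW xs x) ` T x \<subseteq> T (W xs x)" using word_deriv_image_tangent_space[OF g xs] .
  show "DW_inv xs x (DW xs x u) = u" if "u \<in> T x" for u using word_deriv_inv_word_deriv[OF xs x that] .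
  show "0 < deriv_bound ^ length xs" using deriv_bound(1) by simp
  show "norm (DW_inv xs x y) \<le> deriv_bound ^ length xs * norm y" for y
    using norm_blinfun[of "DW_inv xs x" y] norm_word_deriv_inv_le[OF xs x]
    by (meson mult_right_mono norm_ge_zero order_trans)
  show "unit_vecs (orth_compl_in (T x) E) \<noteq> {}" by (rule unit_vecs_orth_compl_nonempty[OF g])
qed

lemma transv_deriv_pos: "tangent_subspace x E \<Longrightarrow> set xs \<subseteq> {1..k} \<Longrightarrow> 0 < transv_deriv x E xs"
  using transv_deriv_ge[of x E xs] deriv_bound(1) by (smt (verit) divide_pos_pos zero_less_power)

lemma conorm_deriv_le: "tangent_subspace x E \<Longrightarrow> set xs \<subseteq> {1..k} \<Longrightarrow> conorm_deriv x E xs \<le> deriv_bound ^ length xs"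
  unfolding conorm_deriv_def
proof (rule conorm_le_bound)
  assume g: "tangent_subspace x E" and xs: "set xs \<subseteq> {1..k}"
  show "unit_vecs E \<noteq> {}" by (rule unit_vecs_tangent_subspace_nonempty[OF g])
  show "norm (DW xs x y) \<le> deriv_bound ^ length xs * norm y" for y
    using norm_blinfun[of "DW xs x" y] norm_word_deriv_le[OF xs] g unfolding tangent_subspace_def
    by (meson mult_right_mono norm_ge_zero order_trans)
qed

lemma conorm_deriv_ge: "tangent_subspace x E \<Longrightarrow> set xs \<subseteq> {1..k} \<Longrightarrow> 1 / deriv_bound ^ length xs \<le> conorm_deriv x E xs"
  unfolding conorm_deriv_def
proof (rule conorm_ge_inverse)
  assume g: "tangent_subspace x E" and xs: "set xs \<subseteq> {1..k}"
  have x: "x \<in> M" using g unfolding tangent_subspace_def by auto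
  show "unit_vecs E \<noteq> {}" by (rule unit_vecs_tangent_subspace_nonempty[OF g])
  show "DW_inv xs x (DW xs x u) = u" if "u \<in> E" for u
    using word_deriv_inv_word_deriv[OF xs x] that g unfolding tangent_subspace_def by blast
  show "0 < deriv_bound ^ length xs" using deriv_bound(1) by simp
  show "norm (DW_inv xs x y) \<le> deriv_bound ^ length xs * norm y" for y
    using norm_blinfun[of "DW_inv xs x" y] norm_word_deriv_inv_le[OF xs x]
    by (meson mult_right_mono norm_ge_zero order_trans)
qed

lemma conorm_deriv_pos: "tangent_subspace x E \<Longrightarrow> set xs \<subseteq> {1..k} \<Longrightarrow> 0 < conorm_deriv x E xs"
  using conorm_deriv_ge[of x E xs] deriv_bound(1) by (smt (verit) divide_pos_pos zero_less_power)

lemma transv_deriv_append_le: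
  assumes g: "tangent_subspace x E" and xs: "set xs \<subseteq> {1..k}" and ys: "set ys \<subseteq> {1..k}"
  shows "transv_deriv x E (xs @ ys) \<le> transv_deriv x E xs * transv_deriv (W xs x) (blinfun_apply (DW xs x) ` E) ys"
proof -
  have x: "x \<in> M" using g unfolding tangent_subspace_def by auto
  have g2: "tangent_subspace (W xs x) (blinfun_apply (DW xs x) ` E)" by (rule tangent_subspace_word_deriv[OF g xs])
  have x2: "W xs x \<in> M" using g2 unfolding tangent_subspace_def by auto
  have comp: "blinfun_apply (DW (xs @ ys) x) = blinfun_apply (DW ys (W xs x)) \<circ> blinfun_apply (DW xs x)"
    by (simp add: word_deriv_append fun_eq_iff)
  have Wapp: "W (xs @ ys) x = W ys (W xs x)" by (simp add: word_map_append)
  show ?thesis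
    unfolding transv_deriv_def comp Wapp
  proof (rule transv_norm_compose_le[OF _ _ _ _ _ linear_blinfun linear_blinfun])
    show "subspace (T x)" "subspace (T (W xs x))" "subspace (T (W ys (W xs x)))"
      using Tsub x x2 word_map_in_M[OF ys x2] by auto
    show "subspace E" "E \<subseteq> T x" using g unfolding tangent_subspace_def by auto
    show "blinfun_apply (DW xs x) ` T x \<subseteq> T (W xs x)" by (rule word_deriv_image_tangent_space[OF g xs])
    show "blinfun_apply (DW ys (W xs x)) ` T (W xs x) \<subseteq> T (W ys (W xs x))" by (rule word_deriv_image_tangent_space[OF g2 ys])
    show "unit_vecs (orth_compl_in (T x) E) \<noteq> {}" by (rule unit_vecs_orth_compl_nonempty[OF g])
    show "unit_vecs (orth_compl_in (T (W xs x)) (blinfun_apply (DW xs x) ` E)) \<noteq> {}" by (rule unit_vecs_orth_compl_nonempty[OF g2])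
  qed
qed

lemma conorm_deriv_append_ge:
  assumes g: "tangent_subspace x E" and xs: "set xs \<subseteq> {1..k}" and ys: "set ys \<subseteq> {1..k}"
  shows "conorm_deriv x E xs * conorm_deriv (W xs x) (blinfun_apply (DW xs x) ` E) ys \<le> conorm_deriv x E (xs @ ys)"
proof -
  have x: "x \<in> M" using g unfolding tangent_subspace_def by auto
  have comp: "blinfun_apply (DW (xs @ ys) x) = blinfun_apply (DW ys (W xs x)) \<circ> blinfun_apply (DW xs x)"
    by (simp add: word_deriv_append fun_eq_iff)
  show ?thesis
    unfolding conorm_deriv_def comp
  proof (rule conorm_compose_ge[OF _ linear_blinfun linear_blinfun])
    show "subspace E" using g unfolding tangent_subspace_def by auto
    show "unit_vecs E \<noteq> {}" by (rule unit_vecs_tangent_subspace_nonempty[OF g])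
    show "DW xs x u \<noteq> 0" if "u \<in> E" "u \<noteq> 0" for u
      using word_deriv_nonzero[OF xs x _ that(2)] that(1) g unfolding tangent_subspace_def by blast
  qed
qed

end

section \<open>Exponential moments of submultiplicative cocycles\<close>

lemma exp_le_quadratic:
  fixes z :: real
  assumes "\<bar>z\<bar> \<le> 1"
  shows "exp z \<le> 1 + z + z\<^sup>2"
proof (cases "z \<ge> 0")
  case True
  then show ?thesis using exp_bound[of z] assms by simp
next
  case False
  define t where "t = - z"
  have t: "0 \<le> t" "t \<le> 1" using False assms by (auto simp: t_def)
  have "1 \<le> (1 + t + t\<^sup>2 / 2) * (1 - t + t\<^sup>2)"
  proof -
    have "(1 + t + t\<^sup>2 / 2) * (1 - t + t\<^sup>2) = 1 + t\<^sup>2 / 2 + t ^ 3 / 2 + t ^ 4 / 2"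
      by (simp add: field_simps power2_eq_square power3_eq_cube power4_eq_xxxx)
    also have "\<dots> \<ge> 1" using t by simp
    finally show ?thesis .
  qed
  also have "\<dots> \<le> exp t * (1 - t + t\<^sup>2)"
    by (rule mult_right_mono[OF exp_lower_Taylor_quadratic[OF t(1)]])
       (use t in \<open>smt (verit) zero_le_power2\<close>)
  finally have "exp (- t) \<le> 1 - t + t\<^sup>2"
    by (simp add: exp_minus field_simps)
  then show ?thesis by (simp add: t_def)
qed

text \<open>A gap \<open>\<delta>\<close> in the mean of a bounded random variable survives in its small exponential
  moments: \<open>E exp (\<sigma> Y) \<le> 1 + \<sigma> E Y + \<sigma>\<^sup>2 K\<^sup>2 \<le> exp (\<sigma> \<mu>)\<close> once \<open>\<sigma> K\<^sup>2 \<le> \<delta>\<close>.\<close>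
lemma word_avg_exp_le:
  fixes Y :: "nat list \<Rightarrow> real"
  assumes k: "k \<ge> 1" and K: "K \<ge> 1" and Yb: "\<And>xs. xs \<in> words k n \<Longrightarrow> \<bar>Y xs\<bar> \<le> K"
    and avgY: "word_avg k n Y \<le> \<mu> - \<delta>"
    and \<sigma>: "0 < \<sigma>" "\<sigma> \<le> 1 / K" "\<sigma> \<le> \<delta> / K\<^sup>2"
  shows "word_avg k n (\<lambda>xs. exp (\<sigma> * Y xs)) \<le> exp (\<sigma> * \<mu>)"
proof -
  have pt: "exp (\<sigma> * Y xs) \<le> (1 + \<sigma>\<^sup>2 * K\<^sup>2) + \<sigma> * Y xs" if xs: "xs \<in> words k n" for xs
  proof -
    have "\<bar>\<sigma> * Y xs\<bar> \<le> \<sigma> * K" using Yb[OF xs] \<sigma>(1) by (simp add: abs_mult mult_left_mono)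
    also have "\<dots> \<le> 1" using \<sigma> K by (simp add: field_simps)
    finally have "exp (\<sigma> * Y xs) \<le> 1 + \<sigma> * Y xs + (\<sigma> * Y xs)\<^sup>2" by (rule exp_le_quadratic)
    moreover have "(Y xs)\<^sup>2 \<le> K\<^sup>2" using power_mono[OF Yb[OF xs] abs_ge_zero, of 2] by simp
    then have "(\<sigma> * Y xs)\<^sup>2 \<le> \<sigma>\<^sup>2 * K\<^sup>2" by (simp add: power_mult_distrib mult_left_mono)
    ultimately show ?thesis by simp
  qed
  have "word_avg k n (\<lambda>xs. exp (\<sigma> * Y xs)) \<le> word_avg k n (\<lambda>xs. (1 + \<sigma>\<^sup>2 * K\<^sup>2) + \<sigma> * Y xs)"
    by (rule word_avg_mono) (rule pt)
  also have "\<dots> = (1 + \<sigma>\<^sup>2 * K\<^sup>2) + \<sigma> * word_avg k n Y"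
    unfolding word_avg_def using k by (simp add: sum.distrib sum_distrib_left card_words add_divide_distrib)
  also have "\<dots> \<le> 1 + \<sigma>\<^sup>2 * K\<^sup>2 + \<sigma> * (\<mu> - \<delta>)"
    using avgY \<sigma>(1) by (simp add: mult_left_mono)
  also have "\<dots> \<le> 1 + \<sigma> * \<mu>"
  proof -
    have "\<sigma> * K\<^sup>2 \<le> \<delta>" using \<sigma>(3) K by (simp add: field_simps)
    then have "\<sigma>\<^sup>2 * K\<^sup>2 \<le> \<sigma> * \<delta>" using \<sigma>(1)
      by (metis mult.assoc mult_left_mono less_eq_real_def power2_eq_square)
    then show ?thesis by (simp add: algebra_simps)
  qed
  also have "\<dots> \<le> exp (\<sigma> * \<mu>)" by (rule exp_ge_add_one_self)
  finally show ?thesis .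
qed

text \<open>Blocks of length \<open>n0\<close> each contribute a factor \<open>exp (n0 \<gamma>)\<close>; the constant absorbs the
  remaining block of length less than \<open>n0\<close>.\<close>
lemma word_avg_submultiplicative_decay:
  fixes \<Phi> :: "'s \<Rightarrow> nat list \<Rightarrow> real" and push :: "'s \<Rightarrow> nat list \<Rightarrow> 's"
  assumes n0: "n0 \<ge> 1" and B: "B \<ge> 0"
    and push: "\<And>s xs. s \<in> S \<Longrightarrow> set xs \<subseteq> {1..k} \<Longrightarrow> push s xs \<in> S"
    and nonneg: "\<And>s xs. s \<in> S \<Longrightarrow> set xs \<subseteq> {1..k} \<Longrightarrow> 0 \<le> \<Phi> s xs"
    and submult: "\<And>s xs ys. s \<in> S \<Longrightarrow> set xs \<subseteq> {1..k} \<Longrightarrow> set ys \<subseteq> {1..k} \<Longrightarrow>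
        \<Phi> s (xs @ ys) \<le> \<Phi> s xs * \<Phi> (push s xs) ys"
    and short: "\<And>s xs. s \<in> S \<Longrightarrow> set xs \<subseteq> {1..k} \<Longrightarrow> length xs < n0 \<Longrightarrow> \<Phi> s xs \<le> B"
    and block: "\<And>s. s \<in> S \<Longrightarrow> word_avg k n0 (\<Phi> s) \<le> exp (real n0 * \<gamma>)"
  shows "s \<in> S \<Longrightarrow> word_avg k N (\<Phi> s) \<le> B * exp (real n0 * \<bar>\<gamma>\<bar>) * exp (real N * \<gamma>)"
proof (induction N arbitrary: s rule: less_induct)
  case (less N)
  define C where "C = B * exp (real n0 * \<bar>\<gamma>\<bar>)"
  have C: "C \<ge> 0" using B by (simp add: C_def)
  show ?case
  proof (cases "N < n0")
    case True
    have "word_avg k N (\<Phi> s) \<le> word_avg k N (\<lambda>_. B)"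
      using short[OF less.prems] True by (intro word_avg_mono) (auto simp: words_def)
    also have "\<dots> \<le> B" using B by (simp add: word_avg_def card_words divide_le_eq)
    also have "\<dots> \<le> C * exp (real N * \<gamma>)"
    proof -
      have "0 \<le> real n0 * \<bar>\<gamma>\<bar> + real N * \<gamma>"
        using True mult_right_mono[of "real N" "real n0" "\<bar>\<gamma>\<bar>"] abs_ge_minus_self[of \<gamma>]
          mult_left_mono[of "- \<gamma>" "\<bar>\<gamma>\<bar>" "real N"] by linarith
      then have "1 \<le> exp (real n0 * \<bar>\<gamma>\<bar>) * exp (real N * \<gamma>)" by (simp add: exp_add[symmetric])
      then show ?thesis using B mult_left_mono[of 1 _ B] by (simp add: C_def mult.assoc)
    qed
    finally show ?thesis by (simp add: C_def)
  next
    case False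
    define N' where "N' = N - n0"
    have N: "N = n0 + N'" using False by (simp add: N'_def)
    have IH: "\<And>s. s \<in> S \<Longrightarrow> word_avg k N' (\<Phi> s) \<le> C * exp (real N' * \<gamma>)"
      using less.IH[of N'] n0 False unfolding C_def N'_def by auto
    have "word_avg k N (\<Phi> s) = word_avg k n0 (\<lambda>xs. word_avg k N' (\<lambda>ys. \<Phi> s (xs @ ys)))"
      unfolding N by (rule word_avg_append)
    also have "\<dots> \<le> word_avg k n0 (\<lambda>xs. \<Phi> s xs * (C * exp (real N' * \<gamma>)))"
    proof (rule word_avg_mono)
      fix xs assume xs: "xs \<in> words k n0"
      then have xs': "set xs \<subseteq> {1..k}" by (rule words_D)
      have "word_avg k N' (\<lambda>ys. \<Phi> s (xs @ ys)) \<le> word_avg k N' (\<lambda>ys. \<Phi> s xs * \<Phi> (push s xs) ys)"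
        using submult[OF less.prems xs'] by (intro word_avg_mono) (simp add: words_def)
      also have "\<dots> = \<Phi> s xs * word_avg k N' (\<Phi> (push s xs))"
        by (rule word_avg_mult_left)
      also have "\<dots> \<le> \<Phi> s xs * (C * exp (real N' * \<gamma>))"
        by (rule mult_left_mono[OF IH[OF push[OF less.prems xs']] nonneg[OF less.prems xs']])
      finally show "word_avg k N' (\<lambda>ys. \<Phi> s (xs @ ys)) \<le> \<Phi> s xs * (C * exp (real N' * \<gamma>))" .
    qed
    also have "\<dots> = word_avg k n0 (\<Phi> s) * (C * exp (real N' * \<gamma>))"
      using word_avg_mult_left[of k n0 "C * exp (real N' * \<gamma>)" "\<Phi> s"] by (simp add: mult.commute)
    also have "\<dots> \<le> exp (real n0 * \<gamma>) * (C * exp (real N' * \<gamma>))"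
      by (rule mult_right_mono[OF block[OF less.prems]]) (simp add: C)
    also have "\<dots> = C * exp (real N * \<gamma>)"
      unfolding N by (simp add: exp_add[symmetric] algebra_simps)
    finally show ?thesis by (simp add: C_def)
  qed
qed

lemma abs_ln_le_if_bounds:
  fixes a L :: real
  assumes "0 < L" "1 / L \<le> a" "a \<le> L"
  shows "\<bar>ln a\<bar> \<le> ln L"
proof -
  have "0 < a" using assms by (smt (verit) divide_pos_pos)
  then have "ln a \<le> ln L" "ln (1 / L) \<le> ln a" using assms by auto
  then show ?thesis using assms(1) by (simp add: ln_div)
qed

context C1_IFS_subspaces
begin

lemma abs_ln_transv_deriv_le:
  "tangent_subspace x E \<Longrightarrow> set xs \<subseteq> {1..k} \<Longrightarrow>
    \<bar>ln (transv_deriv x E xs)\<bar> \<le> real (length xs) * ln deriv_bound"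
  using abs_ln_le_if_bounds[OF _ transv_deriv_ge transv_deriv_le] deriv_bound(1)
  by (simp add: ln_realpow)

lemma abs_ln_conorm_deriv_le:
  "tangent_subspace x E \<Longrightarrow> set xs \<subseteq> {1..k} \<Longrightarrow>
    \<bar>ln (conorm_deriv x E xs)\<bar> \<le> real (length xs) * ln deriv_bound"
  using abs_ln_le_if_bounds[OF _ conorm_deriv_ge conorm_deriv_le] deriv_bound(1)
  by (simp add: ln_realpow)

lemma ln_transv_deriv_append_le:
  assumes "tangent_subspace x E" "set xs \<subseteq> {1..k}" "set ys \<subseteq> {1..k}"
  shows "ln (transv_deriv x E (xs @ ys))
    \<le> ln (transv_deriv x E xs) + ln (transv_deriv (W xs x) (blinfun_apply (DW xs x) ` E) ys)"
proof -
  have p: "0 < transv_deriv x E xs" "0 < transv_deriv (W xs x) (blinfun_apply (DW xs x) ` E) ys"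
    using transv_deriv_pos[OF assms(1,2)] transv_deriv_pos[OF tangent_subspace_word_deriv[OF assms(1,2)] assms(3)] .
  have "0 < transv_deriv x E (xs @ ys)" using transv_deriv_pos[OF assms(1)] assms(2,3) by simp
  then have "ln (transv_deriv x E (xs @ ys))
      \<le> ln (transv_deriv x E xs * transv_deriv (W xs x) (blinfun_apply (DW xs x) ` E) ys)"
    using transv_deriv_append_le[OF assms] p by simp
  then show ?thesis using p by (simp add: ln_mult)
qed

lemma ln_conorm_deriv_append_ge:
  assumes "tangent_subspace x E" "set xs \<subseteq> {1..k}" "set ys \<subseteq> {1..k}"
  shows "ln (conorm_deriv x E xs) + ln (conorm_deriv (W xs x) (blinfun_apply (DW xs x) ` E) ys)
    \<le> ln (conorm_deriv x E (xs @ ys))"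
proof -
  have p: "0 < conorm_deriv x E xs" "0 < conorm_deriv (W xs x) (blinfun_apply (DW xs x) ` E) ys"
    using conorm_deriv_pos[OF assms(1,2)] conorm_deriv_pos[OF tangent_subspace_word_deriv[OF assms(1,2)] assms(3)] .
  have "0 < conorm_deriv x E (xs @ ys)" using conorm_deriv_pos[OF assms(1)] assms(2,3) by simp
  then have "ln (conorm_deriv x E xs * conorm_deriv (W xs x) (blinfun_apply (DW xs x) ` E) ys)
      \<le> ln (conorm_deriv x E (xs @ ys))"
    using conorm_deriv_append_ge[OF assms] p by simp
  then show ?thesis using p by (simp add: ln_mult)
qed

lemma cocycle_exp_moment_bound:
  fixes \<phi> :: "'a \<Rightarrow> 'a set \<Rightarrow> nat list \<Rightarrow> real"
  assumes k: "k \<ge> 1" and n0: "n0 \<ge> 1"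
    and subadd: "\<And>x E xs ys. tangent_subspace x E \<Longrightarrow> set xs \<subseteq> {1..k} \<Longrightarrow> set ys \<subseteq> {1..k} \<Longrightarrow>
        \<phi> x E (xs @ ys) \<le> \<phi> x E xs + \<phi> (W xs x) (blinfun_apply (DW xs x) ` E) ys"
    and bound: "\<And>x E xs. tangent_subspace x E \<Longrightarrow> set xs \<subseteq> {1..k} \<Longrightarrow>
        \<bar>\<phi> x E xs\<bar> \<le> real (length xs) * ln deriv_bound"
    and gap: "\<And>x E. tangent_subspace x E \<Longrightarrow> word_avg k n0 (\<phi> x E) \<le> real n0 * \<mu> - \<delta>"
    and \<sigma>: "0 < \<sigma>" "\<sigma> \<le> 1 / (real n0 * ln deriv_bound + 1)"
      "\<sigma> \<le> \<delta> / (real n0 * ln deriv_bound + 1)\<^sup>2"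
    and xE: "tangent_subspace x E"
  shows "word_avg k N (\<lambda>xs. exp (\<sigma> * \<phi> x E xs))
    \<le> exp (\<sigma> * real n0 * ln deriv_bound) * exp (real n0 * \<bar>\<sigma> * \<mu>\<bar>) * exp (real N * (\<sigma> * \<mu>))"
proof -
  define K where "K = real n0 * ln deriv_bound + 1"
  have lnL: "0 \<le> ln deriv_bound" using deriv_bound(1) by simp
  then have K: "K \<ge> 1" by (simp add: K_def)
  let ?S = "{(x, E). tangent_subspace x E}"
  let ?push = "\<lambda>(x, E) xs. (W xs x, blinfun_apply (DW xs x) ` E)"
  let ?\<Phi> = "\<lambda>(x, E) xs. exp (\<sigma> * \<phi> x E xs)"
  have "word_avg k N (?\<Phi> (x, E)) \<le> exp (\<sigma> * real n0 * ln deriv_bound) * exp (real n0 * \<bar>\<sigma> * \<mu>\<bar>) * exp (real N * (\<sigma> * \<mu>))"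
  proof (rule word_avg_submultiplicative_decay[where S = ?S and push = ?push])
    show "?push s xs \<in> ?S" if "s \<in> ?S" "set xs \<subseteq> {1..k}" for s xs
      using that tangent_subspace_word_deriv by auto
    show "?\<Phi> s (xs @ ys) \<le> ?\<Phi> s xs * ?\<Phi> (?push s xs) ys"
      if "s \<in> ?S" "set xs \<subseteq> {1..k}" "set ys \<subseteq> {1..k}" for s xs ys
      using that subadd[of "fst s" "snd s" xs ys] \<sigma>(1)
      by (auto simp: exp_add[symmetric] distrib_left[symmetric] mult_left_mono)
    show "?\<Phi> s xs \<le> exp (\<sigma> * real n0 * ln deriv_bound)"
      if "s \<in> ?S" "set xs \<subseteq> {1..k}" "length xs < n0" for s xs
    proof -
      have "\<phi> (fst s) (snd s) xs \<le> real n0 * ln deriv_bound"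
        using that bound[of "fst s" "snd s" xs] mult_right_mono[of "real (length xs)" "real n0" "ln deriv_bound"] lnL
        by auto
      then show ?thesis using \<sigma>(1) by (simp add: case_prod_beta mult.assoc mult_le_cancel_left_pos)
    qed
    show "word_avg k n0 (?\<Phi> s) \<le> exp (real n0 * (\<sigma> * \<mu>))" if "s \<in> ?S" for s
    proof -
      have "word_avg k n0 (\<lambda>xs. exp (\<sigma> * \<phi> (fst s) (snd s) xs)) \<le> exp (\<sigma> * (real n0 * \<mu>))"
      proof (rule word_avg_exp_le[OF k K _ gap \<sigma>(1)])
        show "\<bar>\<phi> (fst s) (snd s) xs\<bar> \<le> K" if "xs \<in> words k n0" for xs
          using bound[of "fst s" "snd s" xs] \<open>s \<in> ?S\<close> that by (auto simp: K_def words_def)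
      qed (use \<open>s \<in> ?S\<close> \<sigma> in \<open>auto simp: K_def\<close>)
      then show ?thesis by (simp add: case_prod_beta mult_ac)
    qed
  qed (use n0 xE in auto)
  then show ?thesis by simp
qed

end

section \<open>Orthonormal frames and limits of tangent subspaces\<close>

lemma frequently_strict_mono_subseq:
  assumes "frequently P sequentially"
  shows "\<exists>\<tau>::nat\<Rightarrow>nat. strict_mono \<tau> \<and> (\<forall>j. P (\<tau> j))"
proof -
  have "infinite {j. P j}" using assms by (simp add: frequently_cofinite[symmetric] cofinite_eq_sequentially)
  from infinite_enumerate[OF this] show ?thesis by auto
qed

lemma bounded_convergent_subseq_finite:
  fixes F :: "nat \<Rightarrow> nat \<Rightarrow> 'a::heine_borel"
  assumes "\<And>i. i < n \<Longrightarrow> bounded (range (\<lambda>j. F j i))"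
  shows "\<exists>\<sigma> l. strict_mono (\<sigma>::nat\<Rightarrow>nat) \<and> (\<forall>i<n. (\<lambda>j. F (\<sigma> j) i) \<longlonglongrightarrow> l i)"
  using assms
proof (induction n)
  case 0
  then show ?case by (auto intro!: exI[of _ id] simp: strict_mono_def)
next
  case (Suc n)
  then obtain \<sigma> l where \<sigma>: "strict_mono \<sigma>" "\<And>i. i < n \<Longrightarrow> (\<lambda>j. F (\<sigma> j) i) \<longlonglongrightarrow> l i" by auto
  have "bounded (range (\<lambda>j. F (\<sigma> j) n))"
    using Suc.prems[of n] by (rule bounded_subset) auto
  then obtain l' \<rho> where \<rho>: "strict_mono \<rho>" "((\<lambda>j. F (\<sigma> j) n) \<circ> \<rho>) \<longlonglongrightarrow> l'"
    using bounded_imp_convergent_subsequence by blast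
  show ?case
  proof (intro exI conjI allI impI)
    show "strict_mono (\<sigma> \<circ> \<rho>)" using \<sigma>(1) \<rho>(1) by (rule strict_mono_o)
    fix i assume i: "i < Suc n"
    show "(\<lambda>j. F ((\<sigma> \<circ> \<rho>) j) i) \<longlonglongrightarrow> (l(n := l')) i"
    proof (cases "i = n")
      case True
      then show ?thesis using \<rho>(2) by (simp add: o_def)
    next
      case False
      then have "i < n" using i by simp
      from LIMSEQ_subseq_LIMSEQ[OF \<sigma>(2)[OF this] \<rho>(1)] False show ?thesis by (simp add: o_def)
    qed
  qed
qed

lemma inner_span_orthogonal:
  fixes e :: "nat \<Rightarrow> 'a::euclidean_space"
  assumes "\<And>i. i < r \<Longrightarrow> e i \<bullet> v = 0" "u \<in> span (e ` {..<r})"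
  shows "u \<bullet> v = 0"
proof -
  have "orthogonal v u"
    by (rule orthogonal_to_span[OF assms(2)]) (use assms(1) in \<open>auto simp: orthogonal_def inner_commute\<close>)
  then show ?thesis by (simp add: orthogonal_def inner_commute)
qed

definition orthonormal_frame :: "nat \<Rightarrow> (nat \<Rightarrow> 'a::euclidean_space) \<Rightarrow> bool" where
  "orthonormal_frame r e \<longleftrightarrow> (\<forall>i<r. \<forall>i'<r. e i \<bullet> e i' = (if i = i' then 1 else 0))"

lemma orthonormal_frame_expansion:
  fixes e :: "nat \<Rightarrow> 'a::euclidean_space"
  assumes on: "orthonormal_frame r e" and u: "u \<in> span (e ` {..<r})"
  shows "u = (\<Sum>i<r. (u \<bullet> e i) *\<^sub>R e i)"
proof -
  define w where "w = u - (\<Sum>i<r. (u \<bullet> e i) *\<^sub>R e i)"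
  have we: "e j \<bullet> w = 0" if j: "j < r" for j
  proof -
    have "e j \<bullet> (\<Sum>i<r. (u \<bullet> e i) *\<^sub>R e i) = (\<Sum>i<r. (u \<bullet> e i) * (e j \<bullet> e i))"
      by (simp add: inner_sum_right)
    also have "\<dots> = (\<Sum>i<r. (if i = j then u \<bullet> e j else 0))"
      using on j unfolding orthonormal_frame_def by (intro sum.cong refl) auto
    also have "\<dots> = u \<bullet> e j" using j by simp
    finally show ?thesis unfolding w_def by (simp add: inner_diff_right inner_commute)
  qed
  have "w \<in> span (e ` {..<r})" unfolding w_def
    by (intro span_diff u span_sum span_mul span_base) auto
  then have "w \<bullet> w = 0" using inner_span_orthogonal[of r e w w] we by blast
  then show ?thesis unfolding w_def by simp
qed

lemma dim_span_orthonormal_frame: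
  fixes e :: "nat \<Rightarrow> 'a::euclidean_space"
  assumes on: "orthonormal_frame r e"
  shows "dim (span (e ` {..<r})) = r"
proof -
  have inj: "inj_on e {..<r}"
  proof (rule inj_onI)
    fix i i' assume "i \<in> {..<r}" "i' \<in> {..<r}" "e i = e i'"
    then show "i = i'" using on unfolding orthonormal_frame_def by (metis lessThan_iff zero_neq_one)
  qed
  have "pairwise orthogonal (e ` {..<r})"
    using on unfolding orthonormal_frame_def pairwise_def orthogonal_def by auto
  moreover have "0 \<notin> e ` {..<r}" using on unfolding orthonormal_frame_def by force
  ultimately have "independent (e ` {..<r})" by (rule pairwise_orthogonal_independent)
  then have "dim (e ` {..<r}) = card (e ` {..<r})" by (rule dim_eq_card_independent)
  also have "\<dots> = r" using card_image[OF inj] by simp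
  finally show ?thesis by (simp add: dim_span)
qed

lemma orthonormal_frame_exists:
  fixes E :: "'a::euclidean_space set"
  assumes "subspace E" "dim E = r"
  shows "\<exists>e. orthonormal_frame r e \<and> (\<forall>i<r. e i \<in> E) \<and> span (e ` {..<r}) = E"
proof -
  obtain B where B: "B \<subseteq> E" "pairwise orthogonal B" "\<And>x. x \<in> B \<Longrightarrow> norm x = 1"
    "independent B" "card B = dim E" "span B = E"
    using orthonormal_basis_subspace[OF assms(1)] by metis
  have "finite B" using B(4) by (rule independent_imp_finite)
  then obtain g where g: "bij_betw g {0..<card B} B" using ex_bij_betw_nat_finite by blast
  have gB: "g ` {..<r} = B" using g B(5) assms(2) by (simp add: bij_betw_def atLeast0LessThan)
  have ginj: "inj_on g {..<r}" using g B(5) assms(2) by (simp add: bij_betw_def atLeast0LessThan)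
  have "orthonormal_frame r g"
    unfolding orthonormal_frame_def
  proof (intro allI impI)
    fix i i' assume i: "i < r" "i' < r"
    then have gi: "g i \<in> B" "g i' \<in> B" using gB by auto
    show "g i \<bullet> g i' = (if i = i' then 1 else 0)"
    proof (cases "i = i'")
      case True
      then show ?thesis using B(3)[OF gi(1)] by (simp add: dot_square_norm)
    next
      case False
      then have "g i \<noteq> g i'" using ginj i by (auto dest: inj_onD)
      then show ?thesis using B(2) gi False unfolding pairwise_def orthogonal_def by auto
    qed
  qed
  then show ?thesis using gB B(1,6) by (intro exI[of _ g]) auto
qed

context C1_IFS_subspaces
begin

definition tangent_frame :: "'a \<Rightarrow> (nat \<Rightarrow> 'a) \<Rightarrow> bool" where
  "tangent_frame x e \<longleftrightarrow> orthonormal_frame r e \<and> (\<forall>i<r. e i \<in> T x)"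

definition frames_converge :: "(nat \<Rightarrow> 'a) \<Rightarrow> (nat \<Rightarrow> nat \<Rightarrow> 'a) \<Rightarrow> 'a \<Rightarrow> (nat \<Rightarrow> 'a) \<Rightarrow> bool" where
  "frames_converge xs es x e \<longleftrightarrow>
     (\<forall>j. xs j \<in> M \<and> tangent_frame (xs j) (es j)) \<and> xs \<longlonglongrightarrow> x \<and> (\<forall>i<r. (\<lambda>j. es j i) \<longlonglongrightarrow> e i)"

lemma tangent_subspace_span_frame:
  assumes "x \<in> M" "tangent_frame x e"
  shows "tangent_subspace x (span (e ` {..<r}))"
proof -
  have "e ` {..<r} \<subseteq> T x" using assms(2) unfolding tangent_frame_def by auto
  then have "span (e ` {..<r}) \<subseteq> T x" using Tsub[OF assms(1)] by (rule span_minimal)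
  then show ?thesis
    using assms dim_span_orthonormal_frame unfolding tangent_subspace_def tangent_frame_def by auto
qed

lemma tangent_subspace_frame:
  assumes "tangent_subspace x E"
  shows "\<exists>e. tangent_frame x e \<and> span (e ` {..<r}) = E"
proof -
  have E: "subspace E" "dim E = r" "E \<subseteq> T x" using assms unfolding tangent_subspace_def by auto
  obtain e where "orthonormal_frame r e" "\<forall>i<r. e i \<in> E" "span (e ` {..<r}) = E"
    using orthonormal_frame_exists[OF E(1,2)] by blast
  then show ?thesis using E(3) unfolding tangent_frame_def by blast
qed

lemma norm_tangent_frame: "tangent_frame x e \<Longrightarrow> i < r \<Longrightarrow> norm (e i) = 1"
  unfolding tangent_frame_def orthonormal_frame_def by (metis norm_eq_1)

lemma frames_converge_limit:
  assumes "frames_converge xs es x e"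
  shows "x \<in> M" "tangent_frame x e"
proof -
  have xs: "\<And>j. xs j \<in> M" "xs \<longlonglongrightarrow> x" and fr: "\<And>j. tangent_frame (xs j) (es j)"
    and lim: "\<And>i. i < r \<Longrightarrow> (\<lambda>j. es j i) \<longlonglongrightarrow> e i"
    using assms unfolding frames_converge_def by auto
  show x: "x \<in> M"
    by (rule closed_sequentially[OF compact_imp_closed[OF compactM] _ xs(2)]) (use xs in auto)
  show "tangent_frame x e"
    unfolding tangent_frame_def orthonormal_frame_def
  proof (intro conjI allI impI)
    fix i assume i: "i < r"
    show "e i \<in> T x"
      by (rule Tclosed[OF x xs _ lim[OF i]]) (use fr i in \<open>auto simp: tangent_frame_def\<close>)
  next
    fix i i' assume i: "i < r" "i' < r"
    have "(\<lambda>j. es j i \<bullet> es j i') \<longlonglongrightarrow> e i \<bullet> e i'" by (intro tendsto_inner lim i)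
    moreover have "(\<lambda>j. es j i \<bullet> es j i') = (\<lambda>j. if i = i' then 1 else 0)"
      using fr i unfolding tangent_frame_def orthonormal_frame_def by auto
    ultimately show "e i \<bullet> e i' = (if i = i' then 1 else 0)"
      using LIMSEQ_unique tendsto_const by metis
  qed
qed

lemma frames_converge_subseq:
  assumes "frames_converge xs es x e" "strict_mono \<rho>"
  shows "frames_converge (xs \<circ> \<rho>) (es \<circ> \<rho>) x e"
proof -
  have "(\<lambda>j. es (\<rho> j) i) \<longlonglongrightarrow> e i" if "i < r" for i
    using LIMSEQ_subseq_LIMSEQ[of "\<lambda>j. es j i" "e i" \<rho>] assms that
    unfolding frames_converge_def by (simp add: comp_def)
  then show ?thesis
    using assms LIMSEQ_subseq_LIMSEQ[of xs x \<rho>] unfolding frames_converge_def by auto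
qed

text \<open>Subspaces are represented by orthonormal frames, so compactness of the bundle of tangent
  \<open>r\<close>-planes reduces to Bolzano-Weierstrass for \<open>r + 1\<close> bounded sequences.\<close>
lemma tangent_subspace_convergent_subseq:
  fixes xs :: "nat \<Rightarrow> 'a" and Es :: "nat \<Rightarrow> 'a set"
  assumes g: "\<And>j. tangent_subspace (xs j) (Es j)"
  shows "\<exists>\<tau> x e es. strict_mono \<tau> \<and> frames_converge (xs \<circ> \<tau>) es x e \<and>
    (\<forall>j. span (es j ` {..<r}) = Es (\<tau> j))"
proof -
  obtain fr where fr: "\<And>j. tangent_frame (xs j) (fr j) \<and> span (fr j ` {..<r}) = Es j"
    using tangent_subspace_frame[OF g] by metis
  have xsM: "\<And>j. xs j \<in> M" using g unfolding tangent_subspace_def by auto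
  define F where "F j i = (if i < r then fr j i else xs j)" for j i
  have bd: "bounded (range (\<lambda>j. F j i))" if "i < Suc r" for i
  proof (cases "i < r")
    case True
    have "norm (fr j i) = 1" for j using norm_tangent_frame fr True by blast
    then have "range (\<lambda>j. F j i) \<subseteq> cball 0 1" using True by (auto simp: F_def)
    then show ?thesis using bounded_cball bounded_subset by blast
  next
    case False
    then have "range (\<lambda>j. F j i) \<subseteq> M" using xsM by (auto simp: F_def)
    then show ?thesis using compact_imp_bounded[OF compactM] bounded_subset by blast
  qed
  have "\<exists>\<tau> l. strict_mono (\<tau>::nat\<Rightarrow>nat) \<and> (\<forall>i<Suc r. (\<lambda>j. F (\<tau> j) i) \<longlonglongrightarrow> l i)"
    by (rule bounded_convergent_subseq_finite) (rule bd)
  then obtain \<tau> l where \<tau>: "strict_mono \<tau>" "\<forall>i<Suc r. (\<lambda>j. F (\<tau> j) i) \<longlonglongrightarrow> l i"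
    by blast
  have xl: "(\<lambda>j. xs (\<tau> j)) \<longlonglongrightarrow> l r" using \<tau>(2)[rule_format, of r] by (simp add: F_def)
  have el: "(\<lambda>j. fr (\<tau> j) i) \<longlonglongrightarrow> l i" if "i < r" for i
    using \<tau>(2)[rule_format, of i] that by (simp add: F_def)
  have "frames_converge (xs \<circ> \<tau>) (fr \<circ> \<tau>) (l r) l"
    unfolding frames_converge_def using xl el xsM fr by (simp add: comp_def)
  then show ?thesis using \<tau>(1) fr
    by (intro exI[of _ \<tau>] exI[of _ "l r"] exI[of _ l] exI[of _ "fr \<circ> \<tau>"]) auto
qed

lemma word_map_tendsto:
  assumes "set w \<subseteq> {1..k}" "xs \<longlonglongrightarrow> x"
  shows "(\<lambda>j. W w (xs j)) \<longlonglongrightarrow> W w x"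
  using continuous_on_word_map[OF assms(1)] assms(2)
  by (simp add: continuous_on_eq_continuous_at isCont_tendsto_compose)

lemma word_deriv_tendsto:
  assumes "set w \<subseteq> {1..k}" "xs \<longlonglongrightarrow> x"
  shows "(\<lambda>j. DW w (xs j)) \<longlonglongrightarrow> DW w x"
  using continuous_on_word_deriv[OF assms(1)] assms(2)
  by (simp add: continuous_on_eq_continuous_at isCont_tendsto_compose)

lemma unit_vecs_orth_compl_limit:
  assumes ys: "\<And>j. ys j \<in> M" "ys \<longlonglongrightarrow> y" "y \<in> M" and zs: "\<And>i. i < r \<Longrightarrow> (\<lambda>j. zs j i) \<longlonglongrightarrow> z i"
    and V: "\<And>j. V j \<in> unit_vecs (orth_compl_in (T (ys j)) (span (zs j ` {..<r})))" "V \<longlonglongrightarrow> v"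
  shows "v \<in> unit_vecs (orth_compl_in (T y) (span (z ` {..<r})))"
proof -
  have "(\<lambda>j. norm (V j)) \<longlonglongrightarrow> norm v" by (intro tendsto_intros V(2))
  then have "norm v = 1" using V(1) LIMSEQ_unique[OF _ tendsto_const[of 1]] by (simp add: unit_vecs_def)
  moreover have "v \<in> T y"
    by (rule Tclosed[OF ys(3,1,2) _ V(2)]) (use V(1) in \<open>auto simp: unit_vecs_def orth_compl_in_def\<close>)
  moreover have "z i \<bullet> v = 0" if i: "i < r" for i
  proof -
    have "(\<lambda>j. zs j i \<bullet> V j) \<longlonglongrightarrow> z i \<bullet> v" by (intro tendsto_intros zs i V(2))
    moreover have "zs j i \<bullet> V j = 0" for j
      using V(1)[of j] i by (auto simp: unit_vecs_def orth_compl_in_def intro: span_base)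
    ultimately show ?thesis using LIMSEQ_unique[OF _ tendsto_const[of 0]] by simp
  qed
  ultimately show ?thesis
    using inner_span_orthogonal[of r z v] by (auto simp: unit_vecs_def orth_compl_in_def)
qed

lemma unit_vecs_span_frame_limit:
  assumes conv: "frames_converge xs es x e"
    and U: "\<And>j. U j \<in> unit_vecs (span (es j ` {..<r}))" "U \<longlonglongrightarrow> u"
  shows "u \<in> unit_vecs (span (e ` {..<r}))"
proof -
  have fr: "\<And>j. tangent_frame (xs j) (es j)" and lim: "\<And>i. i < r \<Longrightarrow> (\<lambda>j. es j i) \<longlonglongrightarrow> e i"
    using conv unfolding frames_converge_def by auto
  have "(\<lambda>j. norm (U j)) \<longlonglongrightarrow> norm u" by (intro tendsto_intros U(2))
  then have un: "norm u = 1" using U(1) LIMSEQ_unique[OF _ tendsto_const[of 1]] by (simp add: unit_vecs_def)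
  have "U = (\<lambda>j. \<Sum>i<r. (U j \<bullet> es j i) *\<^sub>R es j i)"
    using fr U(1) by (intro ext orthonormal_frame_expansion) (auto simp: tangent_frame_def unit_vecs_def)
  moreover have "(\<lambda>j. \<Sum>i<r. (U j \<bullet> es j i) *\<^sub>R es j i) \<longlonglongrightarrow> (\<Sum>i<r. (u \<bullet> e i) *\<^sub>R e i)"
    by (intro tendsto_intros U(2) lim) auto
  ultimately have "u = (\<Sum>i<r. (u \<bullet> e i) *\<^sub>R e i)" using U(2) LIMSEQ_unique by metis
  also have "\<dots> \<in> span (e ` {..<r})" by (intro span_sum span_mul span_base) auto
  finally show ?thesis using un by (simp add: unit_vecs_def)
qed

lemma inner_limit_le_transv_deriv:
  assumes conv: "frames_converge ys fs x e" and w: "set w \<subseteq> {1..k}"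
    and V: "\<And>j. V j \<in> unit_vecs (orth_compl_in (T (ys j)) (span (fs j ` {..<r})))" "V \<longlonglongrightarrow> v"
    and G: "\<And>j. G j \<in> unit_vecs (orth_compl_in (T (W w (ys j)))
      (blinfun_apply (DW w (ys j)) ` span (fs j ` {..<r})))" "G \<longlonglongrightarrow> g"
  shows "blinfun_apply (DW w x) v \<bullet> g \<le> transv_deriv x (span (e ` {..<r})) w"
proof -
  let ?A = "\<lambda>y. blinfun_apply (DW w y)"
  have x: "x \<in> M" by (rule frames_converge_limit[OF conv])
  have ys: "\<And>j. ys j \<in> M" "ys \<longlonglongrightarrow> x" and fs: "\<And>i. i < r \<Longrightarrow> (\<lambda>j. fs j i) \<longlonglongrightarrow> e i"
    using conv unfolding frames_converge_def by auto
  have v: "v \<in> unit_vecs (orth_compl_in (T x) (span (e ` {..<r})))"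
    by (rule unit_vecs_orth_compl_limit[OF ys x fs V])
  have span_image: "span ((\<lambda>i. ?A y (z i)) ` {..<r}) = ?A y ` span (z ` {..<r})" for y z
    using span_linear_image[OF linear_blinfun, of "DW w y" "z ` {..<r}"] by (simp add: image_image)
  have "g \<in> unit_vecs (orth_compl_in (T (W w x)) (span ((\<lambda>i. ?A x (e i)) ` {..<r})))"
  proof (rule unit_vecs_orth_compl_limit[where ys = "\<lambda>j. W w (ys j)" and zs = "\<lambda>j i. ?A (ys j) (fs j i)",
        OF _ word_map_tendsto[OF w ys(2)] word_map_in_M[OF w x] _ _ G(2)])
    show "W w (ys j) \<in> M" for j by (rule word_map_in_M[OF w ys(1)])
    show "(\<lambda>j. ?A (ys j) (fs j i)) \<longlonglongrightarrow> ?A x (e i)" if "i < r" for i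
      by (intro tendsto_intros word_deriv_tendsto[OF w ys(2)] fs that)
    show "G j \<in> unit_vecs (orth_compl_in (T (W w (ys j))) (span ((\<lambda>i. ?A (ys j) (fs j i)) ` {..<r})))" for j
      unfolding span_image by (rule G(1))
  qed
  then show ?thesis
    using inner_le_transv_norm[OF linear_blinfun Tsub[OF word_map_in_M[OF w x]] v, of g]
    by (simp add: transv_deriv_def span_image)
qed

text \<open>Witnesses \<open>v, g\<close> with \<open>D v \<bullet> g\<close> large at nearby points have convergent subsequences, and
  their limits are witnesses at the limit point.\<close>
lemma transv_deriv_usc:
  assumes conv: "frames_converge xs es x e" and w: "set w \<subseteq> {1..k}" and \<epsilon>: "\<epsilon> > 0"
  shows "eventually (\<lambda>j. transv_deriv (xs j) (span (es j ` {..<r})) w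
    \<le> transv_deriv x (span (e ` {..<r})) w + \<epsilon>) sequentially"
proof (rule ccontr)
  let ?A = "\<lambda>y. blinfun_apply (DW w y)"
  define Es where "Es j = span (es j ` {..<r})" for j
  define S where "S = transv_deriv x (span (e ` {..<r})) w"
  have xs: "\<And>j. xs j \<in> M" "xs \<longlonglongrightarrow> x" "\<And>j. tangent_frame (xs j) (es j)"
    using conv unfolding frames_converge_def by auto
  have gj: "tangent_subspace (xs j) (Es j)" for j
    unfolding Es_def by (rule tangent_subspace_span_frame[OF xs(1,3)])
  have S0: "0 \<le> S"
    unfolding S_def using frames_converge_limit[OF conv] transv_deriv_pos[OF tangent_subspace_span_frame w]
    by (simp add: less_imp_le)
  assume "\<not> ?thesis"
  then obtain \<tau> :: "nat \<Rightarrow> nat" where \<tau>: "strict_mono \<tau>" "\<And>j. S + \<epsilon> < transv_deriv (xs (\<tau> j)) (Es (\<tau> j)) w"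
    using frequently_strict_mono_subseq unfolding S_def Es_def not_eventually not_le by blast
  have "\<exists>v g. v \<in> unit_vecs (orth_compl_in (T (xs (\<tau> j))) (Es (\<tau> j))) \<and>
      g \<in> unit_vecs (orth_compl_in (T (W w (xs (\<tau> j)))) (?A (xs (\<tau> j)) ` Es (\<tau> j))) \<and>
      S + \<epsilon> < ?A (xs (\<tau> j)) v \<bullet> g" for j
    using less_transv_norm_witness[OF linear_blinfun Tsub[OF word_map_in_M[OF w xs(1)]]
        unit_vecs_orth_compl_nonempty[OF gj] _ \<tau>(2)[unfolded transv_deriv_def]] S0 \<epsilon>
    by (metis add_nonneg_nonneg less_eq_real_def)
  then obtain V G where V: "\<And>j. V j \<in> unit_vecs (orth_compl_in (T (xs (\<tau> j))) (Es (\<tau> j)))"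
    and G: "\<And>j. G j \<in> unit_vecs (orth_compl_in (T (W w (xs (\<tau> j)))) (?A (xs (\<tau> j)) ` Es (\<tau> j)))"
    and VG: "\<And>j. S + \<epsilon> < ?A (xs (\<tau> j)) (V j) \<bullet> G j"
    by metis
  have "norm (V j, G j) \<le> 2" for j
    using norm_Pair_le[of "V j" "G j"] V[of j] G[of j] by (simp add: unit_vecs_def)
  then have "bounded (range (\<lambda>j. (V j, G j)))"
    by (intro bounded_subset[OF bounded_cball[of 0 2]]) auto
  then obtain \<rho> vg where \<rho>: "strict_mono \<rho>" "((\<lambda>j. (V j, G j)) \<circ> \<rho>) \<longlonglongrightarrow> vg"
    using bounded_imp_convergent_subsequence by blast
  have Vl: "(V \<circ> \<rho>) \<longlonglongrightarrow> fst vg" and Gl: "(G \<circ> \<rho>) \<longlonglongrightarrow> snd vg"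
    using tendsto_fst[OF \<rho>(2)] tendsto_snd[OF \<rho>(2)] by (simp_all add: comp_def)
  have conv': "frames_converge (xs \<circ> \<tau> \<circ> \<rho>) (es \<circ> \<tau> \<circ> \<rho>) x e"
    using frames_converge_subseq[OF frames_converge_subseq[OF conv \<tau>(1)] \<rho>(1)] .
  have "(\<lambda>j. ?A (xs (\<tau> (\<rho> j))) (V (\<rho> j)) \<bullet> G (\<rho> j)) \<longlonglongrightarrow> ?A x (fst vg) \<bullet> snd vg"
    using Vl Gl LIMSEQ_subseq_LIMSEQ[OF xs(2) strict_mono_o[OF \<tau>(1) \<rho>(1)]] w
    by (intro tendsto_intros word_deriv_tendsto) (simp_all add: comp_def)
  then have "S + \<epsilon> \<le> ?A x (fst vg) \<bullet> snd vg"
    by (rule LIMSEQ_le_const) (use VG less_imp_le in blast)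
  also have "\<dots> \<le> S"
    unfolding S_def using V G Vl Gl
    by (intro inner_limit_le_transv_deriv[OF conv' w]) (simp_all add: Es_def)
  finally show False using \<epsilon> by simp
qed

lemma conorm_deriv_lsc:
  assumes conv: "frames_converge xs es x e" and w: "set w \<subseteq> {1..k}" and \<epsilon>: "\<epsilon> > 0"
  shows "eventually (\<lambda>j. conorm_deriv x (span (e ` {..<r})) w - \<epsilon>
    \<le> conorm_deriv (xs j) (span (es j ` {..<r})) w) sequentially"
proof (rule ccontr)
  let ?A = "\<lambda>y. blinfun_apply (DW w y)"
  define Es where "Es j = span (es j ` {..<r})" for j
  define S where "S = conorm_deriv x (span (e ` {..<r})) w"
  have xs: "\<And>j. xs j \<in> M" "xs \<longlonglongrightarrow> x" "\<And>j. tangent_frame (xs j) (es j)"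
    using conv unfolding frames_converge_def by auto
  assume "\<not> ?thesis"
  then obtain \<tau> :: "nat \<Rightarrow> nat" where \<tau>: "strict_mono \<tau>" "\<And>j. conorm_deriv (xs (\<tau> j)) (Es (\<tau> j)) w < S - \<epsilon>"
    using frequently_strict_mono_subseq unfolding S_def Es_def not_eventually not_le by blast
  have "\<exists>u. u \<in> unit_vecs (Es (\<tau> j)) \<and> norm (?A (xs (\<tau> j)) u) < S - \<epsilon>" for j
    using \<tau>(2)[of j] cINF_less_iff[OF unit_vecs_tangent_subspace_nonempty bdd_below_norm_image]
      tangent_subspace_span_frame[OF xs(1,3)]
    unfolding conorm_deriv_def conorm_def Es_def by blast
  then obtain U where U: "\<And>j. U j \<in> unit_vecs (Es (\<tau> j))" "\<And>j. norm (?A (xs (\<tau> j)) (U j)) < S - \<epsilon>"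
    by metis
  have "bounded (range U)"
    using U(1) by (intro bounded_subset[OF bounded_cball[of 0 1]]) (auto simp: unit_vecs_def)
  then obtain u \<rho> where \<rho>: "strict_mono (\<rho>::nat\<Rightarrow>nat)" "(U \<circ> \<rho>) \<longlonglongrightarrow> u"
    using bounded_imp_convergent_subsequence by blast
  have conv': "frames_converge (xs \<circ> \<tau> \<circ> \<rho>) (es \<circ> \<tau> \<circ> \<rho>) x e"
    using frames_converge_subseq[OF frames_converge_subseq[OF conv \<tau>(1)] \<rho>(1)] .
  have u: "u \<in> unit_vecs (span (e ` {..<r}))"
    by (rule unit_vecs_span_frame_limit[OF conv' _ \<rho>(2)]) (use U(1) in \<open>simp add: Es_def\<close>)
  have "(\<lambda>j. norm (?A (xs (\<tau> (\<rho> j))) (U (\<rho> j)))) \<longlonglongrightarrow> norm (?A x u)"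
    using \<rho>(2) LIMSEQ_subseq_LIMSEQ[OF xs(2) strict_mono_o[OF \<tau>(1) \<rho>(1)]] w
    by (intro tendsto_intros word_deriv_tendsto) (simp_all add: comp_def)
  then have "norm (?A x u) \<le> S - \<epsilon>"
    by (rule LIMSEQ_le_const2) (use U(2) less_imp_le in blast)
  moreover have "S \<le> norm (?A x u)" unfolding S_def conorm_deriv_def by (rule conorm_lower[OF u])
  ultimately show False using \<epsilon> by simp
qed

end

section \<open>Uniform gaps by compactness\<close>

lemma eventually_ln_le_add:
  fixes g :: "'b \<Rightarrow> real"
  assumes a: "0 < a" and \<eta>: "0 < \<eta>" and le: "\<And>\<epsilon>. 0 < \<epsilon> \<Longrightarrow> eventually (\<lambda>j. g j \<le> a + \<epsilon>) F"
    and pos: "eventually (\<lambda>j. 0 < g j) F"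
  shows "eventually (\<lambda>j. ln (g j) \<le> ln a + \<eta>) F"
proof -
  have "0 < a * (exp \<eta> - 1)" using a \<eta> by simp
  from le[OF this] pos show ?thesis
  proof eventually_elim
    case (elim j)
    then have "ln (g j) \<le> ln (a * exp \<eta>)" using a by (simp add: algebra_simps)
    then show ?case using a by (simp add: ln_mult)
  qed
qed

lemma eventually_ln_ge_diff:
  fixes g :: "'b \<Rightarrow> real"
  assumes a: "0 < a" and \<eta>: "0 < \<eta>" and ge: "\<And>\<epsilon>. 0 < \<epsilon> \<Longrightarrow> eventually (\<lambda>j. a - \<epsilon> \<le> g j) F"
  shows "eventually (\<lambda>j. ln a - \<eta> \<le> ln (g j)) F"
proof -
  have "0 < a * (1 - exp (- \<eta>))" using a \<eta> by simp
  from ge[OF this] show ?thesis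
  proof eventually_elim
    case (elim j)
    then have "a * exp (- \<eta>) \<le> g j" by (simp add: algebra_simps)
    then have "ln (a * exp (- \<eta>)) \<le> ln (g j)" using a by (intro ln_mono) auto
    then show ?case using a by (simp add: ln_mult)
  qed
qed

lemma word_avg_minus: "word_avg k n (\<lambda>xs. - G xs) = - word_avg k n G"
  using word_avg_mult_left[of k n "-1" G] by simp

context C1_IFS_subspaces
begin

lemma uniform_gap:
  fixes F :: "'a \<Rightarrow> 'a set \<Rightarrow> real"
  assumes less: "\<And>x E. tangent_subspace x E \<Longrightarrow> F x E < c"
    and usc: "\<And>xs es x e \<eta>. frames_converge xs es x e \<Longrightarrow> 0 < \<eta> \<Longrightarrow>
      eventually (\<lambda>j. F (xs j) (span (es j ` {..<r})) \<le> F x (span (e ` {..<r})) + \<eta>) sequentially"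
  obtains \<delta> where "0 < \<delta>" "\<And>x E. tangent_subspace x E \<Longrightarrow> F x E \<le> c - \<delta>"
proof -
  have "\<exists>\<delta>>0. \<forall>x E. tangent_subspace x E \<longrightarrow> F x E \<le> c - \<delta>"
  proof (rule ccontr)
    assume none: "\<not> ?thesis"
    have "\<exists>p. tangent_subspace (fst p) (snd p) \<and> c - inverse (real (Suc j)) < F (fst p) (snd p)" for j :: nat
    proof -
      have "0 < inverse (real (Suc j))" by simp
      with none have "\<not> (\<forall>x E. tangent_subspace x E \<longrightarrow> F x E \<le> c - inverse (real (Suc j)))"
        by blast
      then obtain x E where "tangent_subspace x E" "c - inverse (real (Suc j)) < F x E"
        by (auto simp: not_le)
      then show ?thesis by (intro exI[of _ "(x, E)"]) simp
    qed
    then obtain p where p: "\<And>j. tangent_subspace (fst (p j)) (snd (p j))"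
      "\<And>j. c - inverse (real (Suc j)) < F (fst (p j)) (snd (p j))"
      using choice[of "\<lambda>j p. tangent_subspace (fst p) (snd p) \<and> c - inverse (real (Suc j)) < F (fst p) (snd p)"]
      by blast
    obtain \<tau> x e es where \<tau>: "strict_mono \<tau>" "frames_converge ((fst \<circ> p) \<circ> \<tau>) es x e"
      "\<And>j. span (es j ` {..<r}) = (snd \<circ> p) (\<tau> j)"
      using tangent_subspace_convergent_subseq[of "fst \<circ> p" "snd \<circ> p"] p(1) by auto
    define \<eta> where "\<eta> = (c - F x (span (e ` {..<r}))) / 2"
    have "0 < \<eta>"
      using less[OF tangent_subspace_span_frame[OF frames_converge_limit[OF \<tau>(2)]]] by (simp add: \<eta>_def)
    have "eventually (\<lambda>j. F (fst (p (\<tau> j))) (snd (p (\<tau> j))) \<le> c - \<eta>) sequentially"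
    proof -
      have "F x (span (e ` {..<r})) + \<eta> = c - \<eta>" by (simp add: \<eta>_def field_simps)
      with usc[OF \<tau>(2) \<open>0 < \<eta>\<close>] show ?thesis by (simp add: \<tau>(3))
    qed
    moreover have "eventually (\<lambda>j. inverse (real (Suc (\<tau> j))) < \<eta>) sequentially"
      using order_tendstoD(2)[OF LIMSEQ_subseq_LIMSEQ[OF LIMSEQ_inverse_real_of_nat \<tau>(1)] \<open>0 < \<eta>\<close>]
      by (simp add: comp_def)
    ultimately have "eventually (\<lambda>j. F (fst (p (\<tau> j))) (snd (p (\<tau> j))) \<le> c - \<eta> \<and>
        inverse (real (Suc (\<tau> j))) < \<eta>) sequentially"
      by (rule eventually_conj)
    then obtain j where "F (fst (p (\<tau> j))) (snd (p (\<tau> j))) \<le> c - \<eta>" "inverse (real (Suc (\<tau> j))) < \<eta>"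
      using eventually_happens'[OF trivial_limit_sequentially] by blast
    then show False using p(2)[of "\<tau> j"] by simp
  qed
  then show thesis using that by blast
qed

lemma word_avg_ln_transv_deriv_usc:
  assumes k: "k \<ge> 1" and conv: "frames_converge xs es x e" and \<eta>: "0 < \<eta>"
  shows "eventually (\<lambda>j. word_avg k n (\<lambda>w. ln (transv_deriv (xs j) (span (es j ` {..<r})) w))
    \<le> word_avg k n (\<lambda>w. ln (transv_deriv x (span (e ` {..<r})) w)) + \<eta>) sequentially"
proof -
  have xE: "tangent_subspace x (span (e ` {..<r}))"
    by (rule tangent_subspace_span_frame[OF frames_converge_limit[OF conv]])
  have xsE: "tangent_subspace (xs j) (span (es j ` {..<r}))" for j
    using conv tangent_subspace_span_frame unfolding frames_converge_def by blast
  have "eventually (\<lambda>j. \<forall>w\<in>words k n. ln (transv_deriv (xs j) (span (es j ` {..<r})) w)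
      \<le> ln (transv_deriv x (span (e ` {..<r})) w) + \<eta>) sequentially"
    using transv_deriv_pos[OF xE] transv_deriv_pos[OF xsE] transv_deriv_usc[OF conv]
    by (intro eventually_ball_finite[OF finite_words] ballI eventually_ln_le_add[OF _ \<eta>])
       (auto dest: words_D)
  then show ?thesis
  proof eventually_elim
    case (elim j)
    have "word_avg k n (\<lambda>w. ln (transv_deriv (xs j) (span (es j ` {..<r})) w))
        \<le> word_avg k n (\<lambda>w. ln (transv_deriv x (span (e ` {..<r})) w) + \<eta>)"
      using elim by (intro word_avg_mono) simp
    then show ?case unfolding word_avg_add_const[OF k] .
  qed
qed

lemma word_avg_ln_conorm_deriv_lsc:
  assumes k: "k \<ge> 1" and conv: "frames_converge xs es x e" and \<eta>: "0 < \<eta>"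
  shows "eventually (\<lambda>j. - word_avg k n (\<lambda>w. ln (conorm_deriv (xs j) (span (es j ` {..<r})) w))
    \<le> - word_avg k n (\<lambda>w. ln (conorm_deriv x (span (e ` {..<r})) w)) + \<eta>) sequentially"
proof -
  have xE: "tangent_subspace x (span (e ` {..<r}))"
    by (rule tangent_subspace_span_frame[OF frames_converge_limit[OF conv]])
  have "eventually (\<lambda>j. \<forall>w\<in>words k n. ln (conorm_deriv x (span (e ` {..<r})) w) - \<eta>
      \<le> ln (conorm_deriv (xs j) (span (es j ` {..<r})) w)) sequentially"
    using conorm_deriv_pos[OF xE] conorm_deriv_lsc[OF conv]
    by (intro eventually_ball_finite[OF finite_words] ballI eventually_ln_ge_diff[OF _ \<eta>])
       (auto dest: words_D)
  then show ?thesis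
  proof eventually_elim
    case (elim j)
    have "word_avg k n (\<lambda>w. ln (conorm_deriv x (span (e ` {..<r})) w)) + - \<eta>
        \<le> word_avg k n (\<lambda>w. ln (conorm_deriv (xs j) (span (es j ` {..<r})) w))"
      unfolding word_avg_add_const[OF k, symmetric] using elim by (intro word_avg_mono) simp
    then show ?case by simp
  qed
qed

lemma transv_deriv_moment_bound:
  assumes k: "k \<ge> 1" and n0: "n0 \<ge> 1"
    and gap: "\<And>x E. tangent_subspace x E \<Longrightarrow>
      word_avg k n0 (\<lambda>xs. ln (transv_deriv x E xs)) \<le> real n0 * \<mu> - \<delta>"
    and \<sigma>: "0 < \<sigma>" "\<sigma> \<le> 1 / (real n0 * ln deriv_bound + 1)"
      "\<sigma> \<le> \<delta> / (real n0 * ln deriv_bound + 1)\<^sup>2"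
    and xE: "tangent_subspace x E"
  shows "word_avg k N (\<lambda>xs. transv_deriv x E xs powr \<sigma>)
    \<le> exp (\<sigma> * real n0 * ln deriv_bound) * exp (real n0 * \<bar>\<sigma> * \<mu>\<bar>) * exp (real N * (\<sigma> * \<mu>))"
proof -
  have "word_avg k N (\<lambda>xs. transv_deriv x E xs powr \<sigma>)
      = word_avg k N (\<lambda>xs. exp (\<sigma> * ln (transv_deriv x E xs)))"
    using transv_deriv_pos[OF xE words_D(1)[of _ k N]] by (intro word_avg_cong) (force simp: powr_def)
  also have "\<dots> \<le> exp (\<sigma> * real n0 * ln deriv_bound) * exp (real n0 * \<bar>\<sigma> * \<mu>\<bar>) * exp (real N * (\<sigma> * \<mu>))"
    by (rule cocycle_exp_moment_bound[OF k n0 ln_transv_deriv_append_le abs_ln_transv_deriv_le gap \<sigma> xE])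
  finally show ?thesis .
qed

lemma conorm_deriv_moment_bound:
  assumes k: "k \<ge> 1" and n0: "n0 \<ge> 1"
    and gap: "\<And>x E. tangent_subspace x E \<Longrightarrow>
      - word_avg k n0 (\<lambda>xs. ln (conorm_deriv x E xs)) \<le> real n0 * \<mu> - \<delta>"
    and \<sigma>: "0 < \<sigma>" "\<sigma> \<le> 1 / (real n0 * ln deriv_bound + 1)"
      "\<sigma> \<le> \<delta> / (real n0 * ln deriv_bound + 1)\<^sup>2"
    and xE: "tangent_subspace x E"
  shows "word_avg k N (\<lambda>xs. conorm_deriv x E xs powr (- \<sigma>))
    \<le> exp (\<sigma> * real n0 * ln deriv_bound) * exp (real n0 * \<bar>\<sigma> * \<mu>\<bar>) * exp (real N * (\<sigma> * \<mu>))"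
proof -
  have "word_avg k N (\<lambda>xs. conorm_deriv x E xs powr (- \<sigma>))
      = word_avg k N (\<lambda>xs. exp (\<sigma> * - ln (conorm_deriv x E xs)))"
    using conorm_deriv_pos[OF xE words_D(1)[of _ k N]] by (intro word_avg_cong) (force simp: powr_def)
  also have "\<dots> \<le> exp (\<sigma> * real n0 * ln deriv_bound) * exp (real n0 * \<bar>\<sigma> * \<mu>\<bar>) * exp (real N * (\<sigma> * \<mu>))"
  proof (rule cocycle_exp_moment_bound[OF k n0 _ _ gap[unfolded word_avg_minus[symmetric]] \<sigma> xE])
    show "- ln (conorm_deriv x E (xs @ ys))
      \<le> - ln (conorm_deriv x E xs) + - ln (conorm_deriv (W xs x) (blinfun_apply (DW xs x) ` E) ys)"
      if "tangent_subspace x E" "set xs \<subseteq> {1..k}" "set ys \<subseteq> {1..k}" for x E xs ys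
      using ln_conorm_deriv_append_ge[OF that] by simp
  qed (use abs_ln_conorm_deriv_le in auto)
  finally show ?thesis .
qed

theorem moment_bounds:
  assumes k: "k \<ge> 1" and n0: "n0 \<ge> 1"
    and C: "\<And>x E. tangent_subspace x E \<Longrightarrow>
      word_avg k n0 (\<lambda>xs. ln (transv_deriv x E xs)) < - (real n0 * \<kappa>1)"
    and D: "\<And>x E. tangent_subspace x E \<Longrightarrow>
      - (real n0 * \<kappa>2) < word_avg k n0 (\<lambda>xs. ln (conorm_deriv x E xs))"
  obtains C1 \<sigma> where "0 < C1" "0 < \<sigma>"
    "\<And>x E N. tangent_subspace x E \<Longrightarrow>
      word_avg k N (\<lambda>xs. transv_deriv x E xs powr \<sigma>) \<le> C1 * exp (- real N * \<sigma> * \<kappa>1)"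
    "\<And>x E N. tangent_subspace x E \<Longrightarrow>
      word_avg k N (\<lambda>xs. conorm_deriv x E xs powr (- \<sigma>)) \<le> C1 * exp (real N * \<sigma> * \<kappa>2)"
proof -
  obtain \<delta>1 where \<delta>1: "0 < \<delta>1" "\<And>x E. tangent_subspace x E \<Longrightarrow>
      word_avg k n0 (\<lambda>xs. ln (transv_deriv x E xs)) \<le> real n0 * - \<kappa>1 - \<delta>1"
    using uniform_gap[of "\<lambda>x E. word_avg k n0 (\<lambda>xs. ln (transv_deriv x E xs))" "- (real n0 * \<kappa>1)"]
      C word_avg_ln_transv_deriv_usc[OF k] by auto
  obtain \<delta>2 where \<delta>2: "0 < \<delta>2" "\<And>x E. tangent_subspace x E \<Longrightarrow>
      - word_avg k n0 (\<lambda>xs. ln (conorm_deriv x E xs)) \<le> real n0 * \<kappa>2 - \<delta>2"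
  proof (rule uniform_gap[of "\<lambda>x E. - word_avg k n0 (\<lambda>xs. ln (conorm_deriv x E xs))" "real n0 * \<kappa>2"])
    show "- word_avg k n0 (\<lambda>xs. ln (conorm_deriv x E xs)) < real n0 * \<kappa>2" if "tangent_subspace x E" for x E
      using D[OF that] by simp
  qed (use word_avg_ln_conorm_deriv_lsc[OF k] in auto)
  define K where "K = real n0 * ln deriv_bound + 1"
  have K: "K \<ge> 1" using deriv_bound(1) by (simp add: K_def)
  define \<sigma> where "\<sigma> = min (1 / K) (min \<delta>1 \<delta>2 / K\<^sup>2)"
  have "min \<delta>1 \<delta>2 / K\<^sup>2 \<le> \<delta>1 / K\<^sup>2" "min \<delta>1 \<delta>2 / K\<^sup>2 \<le> \<delta>2 / K\<^sup>2"
    by (simp_all add: divide_right_mono)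
  then have \<sigma>: "0 < \<sigma>" "\<sigma> \<le> 1 / K" "\<sigma> \<le> \<delta>1 / K\<^sup>2" "\<sigma> \<le> \<delta>2 / K\<^sup>2"
    using K \<delta>1(1) \<delta>2(1) unfolding \<sigma>_def by auto
  define C1 where "C1 = exp (\<sigma> * real n0 * ln deriv_bound) * exp (real n0 * \<sigma> * (\<bar>\<kappa>1\<bar> + \<bar>\<kappa>2\<bar>))"
  have C1_bound: "exp (\<sigma> * real n0 * ln deriv_bound) * exp (real n0 * \<bar>\<sigma> * \<mu>\<bar>) \<le> C1"
    if "\<bar>\<mu>\<bar> \<le> \<bar>\<kappa>1\<bar> + \<bar>\<kappa>2\<bar>" for \<mu>
  proof -
    have "real n0 * \<bar>\<sigma> * \<mu>\<bar> \<le> real n0 * \<sigma> * (\<bar>\<kappa>1\<bar> + \<bar>\<kappa>2\<bar>)"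
      using that \<sigma>(1) mult_left_mono[OF that, of "real n0 * \<sigma>"] by (simp add: abs_mult mult.assoc)
    then show ?thesis unfolding C1_def by (simp add: mult_le_cancel_left_pos)
  qed
  show thesis
  proof (rule that)
    show "0 < C1" "0 < \<sigma>" using \<sigma>(1) by (simp_all add: C1_def)
  next
    fix x E N assume xE: "tangent_subspace x E"
    have "word_avg k N (\<lambda>xs. transv_deriv x E xs powr \<sigma>)
        \<le> exp (\<sigma> * real n0 * ln deriv_bound) * exp (real n0 * \<bar>\<sigma> * - \<kappa>1\<bar>) * exp (real N * (\<sigma> * - \<kappa>1))"
      by (rule transv_deriv_moment_bound[OF k n0 \<delta>1(2) \<sigma>(1) _ _ xE]) (use \<sigma> in \<open>simp_all add: K_def\<close>)
    also have "\<dots> \<le> C1 * exp (real N * (\<sigma> * - \<kappa>1))" by (rule mult_right_mono[OF C1_bound]) auto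
    finally show "word_avg k N (\<lambda>xs. transv_deriv x E xs powr \<sigma>) \<le> C1 * exp (- real N * \<sigma> * \<kappa>1)"
      by (simp add: algebra_simps)
  next
    fix x E N assume xE: "tangent_subspace x E"
    have "word_avg k N (\<lambda>xs. conorm_deriv x E xs powr (- \<sigma>))
        \<le> exp (\<sigma> * real n0 * ln deriv_bound) * exp (real n0 * \<bar>\<sigma> * \<kappa>2\<bar>) * exp (real N * (\<sigma> * \<kappa>2))"
      by (rule conorm_deriv_moment_bound[OF k n0 \<delta>2(2) \<sigma>(1) _ _ xE]) (use \<sigma> in \<open>simp_all add: K_def\<close>)
    also have "\<dots> \<le> C1 * exp (real N * (\<sigma> * \<kappa>2))" by (rule mult_right_mono[OF C1_bound]) auto
    finally show "word_avg k N (\<lambda>xs. conorm_deriv x E xs powr (- \<sigma>)) \<le> C1 * exp (real N * \<sigma> * \<kappa>2)"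
      by (simp add: mult.assoc)
  qed
qed

end

section \<open>The moment bounds for the Bernoulli IFS\<close>

lemma C1_on_UNIV_derivative:
  assumes "C1_on UNIV g"
  obtains D where "\<And>y. (g has_derivative blinfun_apply (D y)) (at y)" "continuous_on UNIV D"
  using assms unfolding C1_on_def by blast

lemma C1_IFS_subspaces_exists:
  fixes M :: "'a::euclidean_space set"
  assumes M: "compact M" "C1_submanifold TYPE('m::euclidean_space) M"
    and f: "\<And>i. i \<in> {1..k} \<Longrightarrow> C1_diffeo_of M (f i)"
    and r: "1 \<le> r" "r < DIM('m)"
  shows "\<exists>Df h Dh. C1_IFS_subspaces M f k Df h Dh DIM('m) r"
proof -
  let ?data = "\<lambda>i (Dfi, hi, Dhi). (\<forall>y. (f i has_derivative blinfun_apply (Dfi y)) (at y)) \<and>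
      continuous_on UNIV Dfi \<and> (\<forall>y. (hi has_derivative blinfun_apply (Dhi y)) (at y)) \<and>
      continuous_on UNIV Dhi \<and> (\<forall>x\<in>M. hi (f i x) = x)"
  have "\<forall>i\<in>{1..k}. \<exists>p. ?data i p"
  proof
    fix i assume i: "i \<in> {1..k}"
    obtain hi where hi: "C1_on UNIV hi" "\<forall>x\<in>M. hi (f i x) = x \<and> f i (hi x) = x"
      using f[OF i] unfolding C1_diffeo_of_def by blast
    have "C1_on UNIV (f i)" using f[OF i] unfolding C1_diffeo_of_def by blast
    then obtain Dfi where "\<And>y. (f i has_derivative blinfun_apply (Dfi y)) (at y)" "continuous_on UNIV Dfi"
      using C1_on_UNIV_derivative by blast
    moreover obtain Dhi where "\<And>y. (hi has_derivative blinfun_apply (Dhi y)) (at y)" "continuous_on UNIV Dhi"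
      using C1_on_UNIV_derivative[OF hi(1)] by blast
    ultimately show "\<exists>p. ?data i p" using hi(2) by (intro exI[of _ "(Dfi, hi, Dhi)"]) simp
  qed
  from bchoice[OF this] obtain p where p: "\<forall>i\<in>{1..k}. ?data i (p i)" ..
  define Df where "Df i = fst (p i)" for i
  define h where "h i = fst (snd (p i))" for i
  define Dh where "Dh i = snd (snd (p i))" for i
  have D: "(\<forall>y. (f i has_derivative blinfun_apply (Df i y)) (at y)) \<and> continuous_on UNIV (Df i) \<and>
      (\<forall>y. (h i has_derivative blinfun_apply (Dh i y)) (at y)) \<and> continuous_on UNIV (Dh i) \<and>
      (\<forall>x\<in>M. h i (f i x) = x)" if "i \<in> {1..k}" for i
    using bspec[OF p that] unfolding Df_def h_def Dh_def by (simp add: case_prod_beta)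
  have "C1_IFS_subspaces M f k Df h Dh DIM('m) r"
  proof (intro C1_IFS_subspaces.intro C1_IFS.intro C1_IFS_subspaces_axioms.intro)
    fix i assume i: "i \<in> {1..k}"
    show "(f i has_derivative blinfun_apply (Df i y)) (at y)" for y using D[OF i] by blast
    show "continuous_on UNIV (Df i)" using D[OF i] by blast
    show "(h i has_derivative blinfun_apply (Dh i y)) (at y)" for y using D[OF i] by blast
    show "continuous_on UNIV (Dh i)" using D[OF i] by blast
    show "h i (f i x) = x" if "x \<in> M" for x using D[OF i] that by blast
    show "f i x \<in> M" if "x \<in> M" for x
      using f[OF i] that unfolding C1_diffeo_of_def by blast
  next
    show "v \<in> tangent_space M x"
      if "x \<in> M" "\<And>j. xs j \<in> M" "xs \<longlonglongrightarrow> x" "\<And>j. vs j \<in> tangent_space M (xs j)" "vs \<longlonglongrightarrow> v"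
      for x xs vs v
      using tangent_bundle_closed[OF M(2) that] .
  qed (use M(1) r tangent_space_subspace_dim[OF M(2)] in simp_all)
  then show ?thesis by blast
qed

lemma sup_transv_eq_transv_norm:
  "sup_transv M f x E n \<omega> = transv_norm (tangent_space M x)
     (tangent_space M (word_map f (prefix_word n \<omega>) x)) E (Dmap (word_map f (prefix_word n \<omega>)) x)"
  unfolding sup_transv_def transv_norm_def Dfn_def fiter_eq_word_map ..

lemma inf_along_eq_conorm:
  "inf_along f x E n \<omega> = conorm E (Dmap (word_map f (prefix_word n \<omega>)) x)"
  unfolding inf_along_def conorm_def Dfn_def fiter_eq_word_map ..

context C1_IFS_subspaces
begin

lemma integral_sup_transv:
  assumes "k \<ge> 1"
  shows "(\<integral>\<omega>. F (sup_transv M f x E n \<omega>) \<partial>bernoulli_space k) = word_avg k n (\<lambda>xs. F (transv_deriv x E xs))"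
  unfolding sup_transv_eq_transv_norm integral_bernoulli_prefix_word[OF assms, where G = "\<lambda>xs.
    F (transv_norm (T x) (T (W xs x)) E (Dmap (W xs) x))"]
  by (intro word_avg_cong) (simp add: transv_deriv_def Dmap_word_map[OF words_D(1)])

lemma integral_inf_along:
  assumes "k \<ge> 1"
  shows "(\<integral>\<omega>. F (inf_along f x E n \<omega>) \<partial>bernoulli_space k) = word_avg k n (\<lambda>xs. F (conorm_deriv x E xs))"
  unfolding inf_along_eq_conorm integral_bernoulli_prefix_word[OF assms, where G = "\<lambda>xs.
    F (conorm E (Dmap (W xs) x))"]
  by (intro word_avg_cong) (simp add: conorm_deriv_def Dmap_word_map[OF words_D(1)])


theorem uniform_IFS_moment_bounds:
  assumes k: "k \<ge> 1" and unif: "uniform_IFS k d M f n0 \<kappa>1 \<kappa>2 b" and r: "r = d - b"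
  obtains C1 \<sigma> where "0 < C1" "0 < \<sigma>"
    "\<And>x E n. tangent_subspace x E \<Longrightarrow>
      (\<integral>\<omega>. sup_transv M f x E n \<omega> powr \<sigma> \<partial>bernoulli_space k) \<le> C1 * exp (- real n * \<sigma> * \<kappa>1)"
    "\<And>x E n. tangent_subspace x E \<Longrightarrow>
      (\<integral>\<omega>. inf_along f x E n \<omega> powr (- \<sigma>) \<partial>bernoulli_space k) \<le> C1 * exp (real n * \<sigma> * \<kappa>2)"
proof -
  have n0: "n0 \<ge> 1"
    and CD: "\<And>x E. tangent_subspace x E \<Longrightarrow>
      C_fun k M f x E n0 / real n0 < - \<kappa>1 \<and> D_fun k f x E n0 / real n0 > - \<kappa>2"
    using unif r unfolding uniform_IFS_def tangent_subspace_def by auto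
  have C: "word_avg k n0 (\<lambda>xs. ln (transv_deriv x E xs)) < - (real n0 * \<kappa>1)"
    and D: "- (real n0 * \<kappa>2) < word_avg k n0 (\<lambda>xs. ln (conorm_deriv x E xs))"
    if "tangent_subspace x E" for x E
    using CD[OF that] n0 integral_sup_transv[OF k, of ln] integral_inf_along[OF k, of ln]
    unfolding C_fun_def D_fun_def by (auto simp: pos_divide_less_eq pos_less_divide_eq mult.commute)
  obtain C1 \<sigma> where "0 < C1" "0 < \<sigma>"
    "\<And>x E N. tangent_subspace x E \<Longrightarrow>
      word_avg k N (\<lambda>xs. transv_deriv x E xs powr \<sigma>) \<le> C1 * exp (- real N * \<sigma> * \<kappa>1)"
    "\<And>x E N. tangent_subspace x E \<Longrightarrow>
      word_avg k N (\<lambda>xs. conorm_deriv x E xs powr (- \<sigma>)) \<le> C1 * exp (real N * \<sigma> * \<kappa>2)"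
    using moment_bounds[OF k n0 C D] by blast
  then show thesis
    using that integral_sup_transv[OF k, of "\<lambda>t. t powr \<sigma>"] integral_inf_along[OF k, of "\<lambda>t. t powr - \<sigma>"]
    by simp
qed

end

theorem mainTheorem7:
  fixes M :: "'a::euclidean_space set"
    and f :: "nat \<Rightarrow> 'a \<Rightarrow> 'a"
    and k n0 b :: nat and \<kappa>1 \<kappa>2 :: real
  assumes "k \<ge> 1"
    and "compact M" and "M \<noteq> {}"
    and "C1_submanifold TYPE('m::euclidean_space) M"
    and "\<And>i. i \<in> {1..k} \<Longrightarrow> C1_diffeo_of M (f i)"
    and "\<And>i. i \<in> {1..k} \<Longrightarrow> volume_preserving DIM('m) M (f i)"
    and "uniform_IFS k DIM('m) M f n0 \<kappa>1 \<kappa>2 b"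
  shows "\<exists>C1 \<sigma>. C1 > 0 \<and> \<sigma> > 0 \<and>
     (\<forall>x\<in>M. \<forall>E. subspace E \<and> E \<subseteq> tangent_space M x \<and> dim E = DIM('m) - b \<longrightarrow>
        (\<forall>n::nat.
          (\<integral>\<omega>. sup_transv M f x E n \<omega> powr \<sigma> \<partial>bernoulli_space k) < C1 * exp (- real n * \<sigma> * \<kappa>1) \<and>
          (\<integral>\<omega>. inf_along f x E n \<omega> powr (- \<sigma>) \<partial>bernoulli_space k) < C1 * exp (real n * \<sigma> * \<kappa>2)))"
proof -
  have "1 \<le> DIM('m) - b" "DIM('m) - b < DIM('m)"
    using assms(7) unfolding uniform_IFS_def by auto
  then obtain Df h Dh where "C1_IFS_subspaces M f k Df h Dh DIM('m) (DIM('m) - b)"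
    using C1_IFS_subspaces_exists[where k = k and f = f, OF assms(2,4,5)] by blast
  then interpret C1_IFS_subspaces M f k Df h Dh "DIM('m)" "DIM('m) - b" .
  obtain C1 \<sigma> where C1: "0 < C1" "0 < \<sigma>" and bounds:
    "\<And>x E n. tangent_subspace x E \<Longrightarrow>
      (\<integral>\<omega>. sup_transv M f x E n \<omega> powr \<sigma> \<partial>bernoulli_space k) \<le> C1 * exp (- real n * \<sigma> * \<kappa>1)"
    "\<And>x E n. tangent_subspace x E \<Longrightarrow>
      (\<integral>\<omega>. inf_along f x E n \<omega> powr (- \<sigma>) \<partial>bernoulli_space k) \<le> C1 * exp (real n * \<sigma> * \<kappa>2)"
    using uniform_IFS_moment_bounds[OF assms(1,7) refl] by blast
  have lt: "C1 * exp t < 2 * C1 * exp t" for t using C1(1) by simp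
  have main: "\<forall>x\<in>M. \<forall>E. subspace E \<and> E \<subseteq> tangent_space M x \<and> dim E = DIM('m) - b \<longrightarrow>
      (\<forall>n::nat.
        (\<integral>\<omega>. sup_transv M f x E n \<omega> powr \<sigma> \<partial>bernoulli_space k) < 2 * C1 * exp (- real n * \<sigma> * \<kappa>1) \<and>
        (\<integral>\<omega>. inf_along f x E n \<omega> powr (- \<sigma>) \<partial>bernoulli_space k) < 2 * C1 * exp (real n * \<sigma> * \<kappa>2))"
    using bounds by (auto simp: tangent_subspace_def intro!: order.strict_trans1[OF _ lt])
  show ?thesis by (rule exI[of _ "2 * C1"], rule exI[of _ \<sigma>]) (use C1 main in auto)
qed

end
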